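(* (i) Let $\mathcal L(z_1,z_2)=\hat{\mathcal L}(z_1,z_2)z_1^{Z_1}z_2^{Z_2}$ be the fundamental solution of the formal 2KZ equation normalized at the origin. Then $$\mathcal L=\hat{\mathcal L}^{(1)}_{1\otimes2}\hat{\mathcal L}^{(2)}_{1\otimes2}z_1^{Z_1}z_2^{Z_2}=\mathcal L^{(1)}_{1\otimes2}\mathcal L^{(2)}_{1\otimes2}=\hat{\mathcal L}^{(2)}_{2\otimes1}\hat{\mathcal L}^{(1)}_{2\otimes1}z_1^{Z_1}z_2^{Z_2}=\mathcal L^{(2)}_{2\otimes1}\mathcal L^{(1)}_{2\otimes1}.$$ (ii) Conversely, let $\{i_1,i_2\}=\{1,2\}$ and suppose $\mathcal L(z_1,z_2)=G^{(i_1)}G^{(i_2)}$, where for $k=1,2$, $G^{(i_k)}=\hat G^{(i_k)}z_{i_k}^{Z_{i_k}}$ is an analytic function with values in the completion of $\mathcal U(\mathfrak X^{(i_k)}_{i_1\otimes i_2})$, normalized at $z_{i_k}=0$ (i.e. $\hat G^{(i_k)}$ is holomorphic near $z_{i_k}=0$ and equals $\mathbf I$ there), and $G^{(i_2)}$ depends on $z_{i_2}$ only. Then $G^{(i_k)}=\mathcal L^{(i_k)}_{i_1\otimes i_2}$ for $k=1,2$.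
   Context: $\mathfrak X$ is the complex Lie algebra generated by $Z_1,Z_{11},Z_2,Z_{22},Z_{12}$ subject only to $[Z_1,Z_2]=[Z_{11},Z_2]=[Z_1,Z_{22}]=0$ and $[Z_{11},Z_{22}]=-[Z_{11},Z_{12}]=[Z_{22},Z_{12}]=-[Z_1-Z_2,Z_{12}]$. $\mathcal U(\mathfrak X)=\bigoplus_s\mathcal U_s(\mathfrak X)$ is graded by word length, $\widetilde{\mathcal U}(\mathfrak X)$ is its completion, $\mathbf I$ the unit. $\mathfrak X^{(1)}_{1\otimes2},\mathfrak X^{(2)}_{1\otimes2},\mathfrak X^{(2)}_{2\otimes1},\mathfrak X^{(1)}_{2\otimes1}$ are the Lie subalgebras generated by $\{Z_1,Z_{11},Z_{12}\}$, $\{Z_2,Z_{22}\}$, $\{Z_2,Z_{22},Z_{12}\}$, $\{Z_1,Z_{11}\}$. Forms on $\mathbf P^1\times\mathbf P^1$: $\zeta_i=dz_i/z_i$, $\zeta_{ii}=dz_i/(1-z_i)$ ($i=1,2$), $\zeta_{12}=d(z_1z_2)/(1-z_1z_2)$, $\zeta^{(1)}_{12}=z_2dz_1/(1-z_1z_2)$, $\zeta^{(2)}_{12}=z_1dz_2/(1-z_1z_2)$. The formal 2KZ equation is $dG=\Omega G$, $\Omega=\zeta_1Z_1+\zeta_{11}Z_{11}+\zeta_2Z_2+\zeta_{22}Z_{22}+\zeta_{12}Z_{12}$. Its fundamental solution normalized at the origin is the (unique) solution $\mathcal L=\hat{\mathcal L}z_1^{Z_1}z_2^{Z_2}$ with $\hat{\mathcal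 L}=\sum_s\hat{\mathcal L}_s$, $\hat{\mathcal L}_s$ $\mathcal U_s(\mathfrak X)$-valued, holomorphic near $(0,0)$, $\hat{\mathcal L}_0=\mathbf I$, $\hat{\mathcal L}_s(0,0)=0$ for $s>0$. Consider the four equations ($d_{z_i}$ = exterior derivative in $z_i$ only, other variable a parameter): $d_{z_1}G=(\zeta_1Z_1+\zeta_{11}Z_{11}+\zeta^{(1)}_{12}Z_{12})G$, $d_{z_2}G=(\zeta_2Z_2+\zeta_{22}Z_{22})G$, $d_{z_2}G=(\zeta_2Z_2+\zeta_{22}Z_{22}+\zeta^{(2)}_{12}Z_{12})G$, $d_{z_1}G=(\zeta_1Z_1+\zeta_{11}Z_{11})G$. Their fundamental solutions normalized at the origin are denoted $\mathcal L^{(1)}_{1\otimes2}$ (function of $z_1,z_2$), $\mathcal L^{(2)}_{1\otimes2}$ (function of $z_2$), $\mathcal L^{(2)}_{2\otimes1}$ (function of $z_1,z_2$), $\mathcal L^{(1)}_{2\otimes1}$ (function of $z_1$): in each case $\mathcal L^{(i_k)}_{i_1\otimes i_2}=\hat{\mathcal L}^{(i_k)}_{i_1\otimes i_2}z_{i_k}^{Z_{i_k}}$ with $\hat{\mathcal L}^{(i_k)}_{i_1\otimes i_2}=\sum_s\hat{\mathcal L}^{(i_k)}_{i_1\otimes i_2,s}$, homogeneous parts of degree $s$, holomorphic near $z_{i_k}=0$, with $\hat{\mathcal L}^{(i_k)}_{i_1\otimes i_2,s}|_{z_{i_k}=0}=0$ for $s>0$ and $=\mathbf I$ for $s=0$.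 *)

theory Defs
  imports "HOL-Analysis.Analysis"
begin

text \<open>U(X) is the free associative algebra on these letters modulo
the two-sided ideal generated by the defining Lie relations (written as commutators).
An element of the completion is represented by a formal noncommutative power series,
i.e. a function from words to complex coefficients; two series represent the same
element of the completed U(X) iff every homogeneous component of their difference
lies in the ideal (the ideal is generated by homogeneous elements of degree 2).\<close>

datatype gen = Z1 | Z11 | Z2 | Z22 | Z12

type_synonym ser = "gen list \<Rightarrow> complex"

definition smul :: "ser \<Rightarrow> ser \<Rightarrow> ser" (infixl "\<odot>" 70) where
  "a \<odot> b = (\<lambda>w. \<Sum>k\<le>length w. a (take k w) * b (drop k w))"

definition sadd :: "ser \<Rightarrow> ser \<Rightarrow> ser" where
  "sadd a b = (\<lambda>w. a w + b w)"

definition ssub :: "ser \<Rightarrow> ser \<Rightarrow> ser" where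
  "ssub a b = (\<lambda>w. a w - b w)"

definition sscal :: "complex \<Rightarrow> ser \<Rightarrow> ser" where
  "sscal c a = (\<lambda>w. c * a w)"

definition wd :: "gen list \<Rightarrow> ser" where
  "wd u = (\<lambda>w. if w = u then 1 else 0)"

definition one :: ser where
  "one = wd []"

definition lt :: "gen \<Rightarrow> ser" where
  "lt g = wd [g]"

definition comm :: "ser \<Rightarrow> ser \<Rightarrow> ser" where
  "comm a b = ssub (a \<odot> b) (b \<odot> a)"

text \<open>Defining relations:
 [Z1,Z2]=[Z11,Z2]=[Z1,Z22]=0 and
 [Z11,Z22] = -[Z11,Z12] = [Z22,Z12] = -[Z1-Z2,Z12].\<close>
definition rels :: "ser list" where
  "rels =
    [ comm (lt Z1) (lt Z2),
      comm (lt Z11) (lt Z2),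
      comm (lt Z1) (lt Z22),
      sadd (comm (lt Z11) (lt Z22)) (comm (lt Z11) (lt Z12)),
      ssub (comm (lt Z11) (lt Z22)) (comm (lt Z22) (lt Z12)),
      sadd (comm (lt Z11) (lt Z22)) (comm (ssub (lt Z1) (lt Z2)) (lt Z12)) ]"

inductive idl :: "ser \<Rightarrow> bool" where
  idl_zero: "idl (\<lambda>_. 0)"
| idl_gen: "r \<in> set rels \<Longrightarrow> idl (wd u \<odot> r \<odot> wd v)"
| idl_add: "idl a \<Longrightarrow> idl b \<Longrightarrow> idl (sadd a b)"
| idl_scal: "idl a \<Longrightarrow> idl (sscal c a)"

definition hom :: "nat \<Rightarrow> ser \<Rightarrow> ser" where
  "hom s a = (\<lambda>w. if length w = s then a w else 0)"

definition ueq :: "ser \<Rightarrow> ser \<Rightarrow> bool" where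
  "ueq a b \<longleftrightarrow> (\<forall>s. idl (hom s (ssub a b)))"

text \<open>Membership in the completion of U(h), h the Lie subalgebra generated by the
letters in A (the image of U(h) in U(X) is the associative subalgebra generated by A).\<close>
definition in_sub :: "gen set \<Rightarrow> ser \<Rightarrow> bool" where
  "in_sub A a \<longleftrightarrow> (\<exists>b. (\<forall>w. b w \<noteq> 0 \<longrightarrow> set w \<subseteq> A) \<and> ueq a b)"

text \<open>z^Z = exp(Z log z), principal branch of the logarithm.\<close>
definition zpow :: "gen \<Rightarrow> complex \<Rightarrow> ser" where
  "zpow g z = (\<lambda>w. if w = replicate (length w) g then Ln z ^ length w / fact (length w) else 0)"

text \<open>Slit disc around 0 (where the branch of z^Z is defined).\<close>
definition slit :: "real \<Rightarrow> complex set" where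
  "slit r = ball 0 r - {z. Im z = 0 \<and> Re z \<le> 0}"

definition sderiv :: "(complex \<Rightarrow> ser) \<Rightarrow> complex \<Rightarrow> ser" where
  "sderiv F z = (\<lambda>w. deriv (\<lambda>t. F t w) z)"

text \<open>Connection forms (dz1- and dz2-components of Omega, and the partial ones).\<close>
definition Om1 :: "complex \<Rightarrow> complex \<Rightarrow> ser" where
  "Om1 z1 z2 = sadd (sadd (sscal (1 / z1) (lt Z1)) (sscal (1 / (1 - z1)) (lt Z11)))
                    (sscal (z2 / (1 - z1 * z2)) (lt Z12))"

definition Om2 :: "complex \<Rightarrow> complex \<Rightarrow> ser" where
  "Om2 z1 z2 = sadd (sadd (sscal (1 / z2) (lt Z2)) (sscal (1 / (1 - z2)) (lt Z22)))
                    (sscal (z1 / (1 - z1 * z2)) (lt Z12))"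

definition Om1s :: "complex \<Rightarrow> ser" where
  "Om1s z1 = sadd (sscal (1 / z1) (lt Z1)) (sscal (1 / (1 - z1)) (lt Z11))"

definition Om2s :: "complex \<Rightarrow> ser" where
  "Om2s z2 = sadd (sscal (1 / z2) (lt Z2)) (sscal (1 / (1 - z2)) (lt Z22))"

text \<open>Fundamental solution of the formal 2KZ equation normalized at the origin, given by
its holomorphic part H (so L z1 z2 = H z1 z2 z1^Z1 z2^Z2).  The coefficients of H
(hence all homogeneous parts) are holomorphic near (0,0) (separately holomorphic in each
variable on a polydisc, i.e. holomorphic by Hartogs), H_0 = I, H_s(0,0) = 0 for s > 0,
and dL = Omega L, i.e. both partial equations, on the slit polydisc.\<close>
definition Lof :: "(complex \<Rightarrow> complex \<Rightarrow> ser) \<Rightarrow> complex \<Rightarrow> complex \<Rightarrow> ser" where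
  "Lof H z1 z2 = H z1 z2 \<odot> zpow Z1 z1 \<odot> zpow Z2 z2"

definition fsol2KZ :: "(complex \<Rightarrow> complex \<Rightarrow> ser) \<Rightarrow> bool" where
  "fsol2KZ H \<longleftrightarrow> (\<exists>r>0.
     (\<forall>w. \<forall>z2\<in>ball 0 r. (\<lambda>z1. H z1 z2 w) holomorphic_on ball 0 r) \<and>
     (\<forall>w. \<forall>z1\<in>ball 0 r. (\<lambda>z2. H z1 z2 w) holomorphic_on ball 0 r) \<and>
     (\<forall>z1\<in>ball 0 r. \<forall>z2\<in>ball 0 r. H z1 z2 [] = 1) \<and>
     ueq (H 0 0) one \<and>
     (\<forall>z1\<in>slit r. \<forall>z2\<in>slit r.
        ueq (sderiv (\<lambda>t. Lof H t z2) z1) (Om1 z1 z2 \<odot> Lof H z1 z2) \<and>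
        ueq (sderiv (\<lambda>t. Lof H z1 t) z2) (Om2 z1 z2 \<odot> Lof H z1 z2)))"

text \<open>Fundamental solution, normalized at z = 0, of the equation d_z G = A(z,p) G in
the single active variable z (p a parameter), with G = H(z,p) z^(Z_g).\<close>
definition fsol1 :: "gen \<Rightarrow> (complex \<Rightarrow> complex \<Rightarrow> ser) \<Rightarrow> (complex \<Rightarrow> complex \<Rightarrow> ser) \<Rightarrow> bool" where
  "fsol1 g A H \<longleftrightarrow> (\<exists>r>0. \<forall>p\<in>ball 0 r.
     (\<forall>w. (\<lambda>z. H z p w) holomorphic_on ball 0 r) \<and>
     (\<forall>z\<in>ball 0 r. H z p [] = 1) \<and>
     ueq (H 0 p) one \<and>
     (\<forall>z\<in>slit r. ueq (sderiv (\<lambda>t. H t p \<odot> zpow g t) z) (A z p \<odot> (H z p \<odot> zpow g z))))"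

end

theory Submission
  imports Defs "HOL-Complex_Analysis.Complex_Analysis"
begin

text \<open>Everything rests on uniqueness of normalized solutions.  Modulo the ideal of relations,
  the holomorphic part \<open>X\<close> of a solution \<open>X z\<^sup>Z\<close> satisfies \<open>X' = \<Sum> q(z) (g X or X g)\<close> over letters
  \<open>g\<close>, which raises the degree.  Testing in each degree against the finitely many linear
  functionals that cut out the ideal, an induction on the degree shows that two solutions with
  the same value at \<open>0\<close> coincide.

  For (i), letting \<open>z\<^sub>1 \<rightarrow> 0\<close> in the \<open>z\<^sub>2\<close>-equation of \<open>\<hat>L\<close> shows that \<open>\<hat>L(0, \<cdot>)\<close> is the normalized
  solution of the reduced \<open>z\<^sub>2\<close>-equation.  There the \<open>Z\<^sub>1\<^sub>2\<close>-term has disappeared, and since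
  \<open>[Z\<^sub>1, Z\<^sub>2] = [Z\<^sub>1, Z\<^sub>2\<^sub>2] = 0\<close> this solution commutes with \<open>Z\<^sub>1\<close>.  Hence \<open>\<hat>L\<close> and the product of
  the two partial solutions satisfy the same \<open>z\<^sub>1\<close>-equation with the same initial value.
  For (ii), since the second factor does not depend on \<open>z\<^sub>1\<close>, the first factor satisfies the
  \<open>z\<^sub>1\<close>-equation of \<open>\<hat>L\<close>, hence is the normalized solution, and the second factor is obtained by
  cancelling the invertible first one.\<close>

section \<open>Noncommutative formal power series\<close>

definition szero :: ser where "szero = (\<lambda>_. 0)"

definition sshift :: "gen \<Rightarrow> ser \<Rightarrow> ser" where "sshift x a = (\<lambda>u. a (x # u))"

lemma sadd_apply: "sadd a b w = a w + b w" by (simp add: sadd_def)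
lemma ssub_apply: "ssub a b w = a w - b w" by (simp add: ssub_def)
lemma sscal_apply: "sscal c a w = c * a w" by (simp add: sscal_def)
lemma szero_apply: "szero w = 0" by (simp add: szero_def)

lemmas ser_apply = sadd_apply ssub_apply sscal_apply szero_apply

lemma szero_eq: "(\<lambda>_. 0) = szero" by (simp add: szero_def)

lemma smul_Nil[simp]: "(a \<odot> b) [] = a [] * b []"
  by (simp add: smul_def)

lemma smul_Cons: "(a \<odot> b) (x # w) = a [] * b (x # w) + (sshift x a \<odot> b) w"
  unfolding smul_def sshift_def
  by (simp add: sum.atMost_Suc_shift del: sum.atMost_Suc)

lemma smul_sadd_left: "sadd a b \<odot> c = sadd (a \<odot> c) (b \<odot> c)"
  by (rule ext) (simp add: smul_def algebra_simps sum.distrib ser_apply)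
lemma smul_sadd_right: "c \<odot> sadd a b = sadd (c \<odot> a) (c \<odot> b)"
  by (rule ext) (simp add: smul_def algebra_simps sum.distrib ser_apply)
lemma smul_ssub_left: "ssub a b \<odot> c = ssub (a \<odot> c) (b \<odot> c)"
  by (rule ext) (simp add: smul_def algebra_simps sum_subtractf ser_apply)
lemma smul_ssub_right: "c \<odot> ssub a b = ssub (c \<odot> a) (c \<odot> b)"
  by (rule ext) (simp add: smul_def algebra_simps sum_subtractf ser_apply)
lemma smul_sscal_left: "sscal k a \<odot> c = sscal k (a \<odot> c)"
  by (rule ext) (simp add: smul_def sum_distrib_left algebra_simps ser_apply)
lemma smul_sscal_right: "c \<odot> sscal k a = sscal k (c \<odot> a)"
  by (rule ext) (simp add: smul_def sum_distrib_left algebra_simps ser_apply)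
lemma smul_szero_left[simp]: "szero \<odot> c = szero"
  by (rule ext) (simp add: smul_def ser_apply)
lemma smul_szero_right[simp]: "c \<odot> szero = szero"
  by (rule ext) (simp add: smul_def ser_apply)
lemma sadd_szero_left[simp]: "sadd szero x = x"
  by (rule ext) (simp add: ser_apply)
lemma sadd_szero_right[simp]: "sadd x szero = x"
  by (rule ext) (simp add: ser_apply)

lemma sshift_smul: "sshift x (a \<odot> b) = sadd (sscal (a []) (sshift x b)) (sshift x a \<odot> b)"
  by (rule ext) (simp add: sshift_def smul_Cons ser_apply)

lemma smul_assoc: "(a \<odot> b) \<odot> c = a \<odot> (b \<odot> c)"
proof (rule ext)
  fix w show "((a \<odot> b) \<odot> c) w = (a \<odot> (b \<odot> c)) w"
  proof (induction w arbitrary: a)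
    case (Cons x w)
    have "((a \<odot> b) \<odot> c) (x # w)
        = a [] * b [] * c (x # w) + a [] * (sshift x b \<odot> c) w + ((sshift x a \<odot> b) \<odot> c) w"
      by (simp add: smul_Cons sshift_smul smul_sadd_left smul_sscal_left ser_apply)
    also have "\<dots> = (a \<odot> (b \<odot> c)) (x # w)"
      using Cons by (simp add: smul_Cons algebra_simps)
    finally show ?case .
  qed simp
qed

lemma wd_simps[simp]: "wd [] [] = 1" "wd (y # u) [] = 0" "wd [] (x # w) = 0"
  by (simp_all add: wd_def)

lemma sshift_wd: "sshift x (wd u) = (case u of [] \<Rightarrow> szero | y # u' \<Rightarrow> if x = y then wd u' else szero)"
  by (rule ext) (auto simp: sshift_def wd_def szero_def split: list.splits)

lemma wd_smul_apply: "(wd u \<odot> b) w = (if take (length u) w = u then b (drop (length u) w) else 0)"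
proof (induction u arbitrary: w)
  case Nil
  show ?case by (cases w) (simp_all add: smul_Cons sshift_wd ser_apply)
next
  case (Cons y u)
  then show ?case
    by (cases w) (auto simp: smul_Cons sshift_wd ser_apply)
qed

lemma one_Nil[simp]: "one [] = 1" by (simp add: one_def)

lemma one_smul[simp]: "one \<odot> a = a"
  by (rule ext) (simp add: one_def wd_smul_apply)

lemma smul_one[simp]: "a \<odot> one = a"
proof (rule ext)
  fix w show "(a \<odot> one) w = a w"
  proof (induction w arbitrary: a)
    case (Cons x w) then show ?case by (simp add: smul_Cons one_def sshift_def)
  qed (simp add: one_def)
qed

lemma wd_smul_wd: "wd u \<odot> wd v = wd (u @ v)"
proof (rule ext)
  fix w show "(wd u \<odot> wd v) w = wd (u @ v) w"
    unfolding wd_smul_apply by (auto simp add: wd_def append_eq_conv_conj) (metis append_take_drop_id)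
qed

lemma lt_Nil[simp]: "lt g [] = 0" by (simp add: lt_def)

lemma lt_smul_apply: "(lt g \<odot> x) w = (if w \<noteq> [] \<and> hd w = g then x (tl w) else 0)"
  unfolding lt_def wd_smul_apply by (cases w) (auto simp: take_Suc)


section \<open>Homogeneous components, the ideal of relations and equality modulo it\<close>

definition homog :: "nat \<Rightarrow> ser \<Rightarrow> bool" where
  "homog m a \<longleftrightarrow> (\<forall>w. a w \<noteq> 0 \<longrightarrow> length w = m)"

lemma homog_smul: "homog m a \<Longrightarrow> homog n b \<Longrightarrow> homog (m + n) (a \<odot> b)"
proof (unfold homog_def, intro allI impI)
  fix w assume a: "\<forall>w. a w \<noteq> 0 \<longrightarrow> length w = m" and b: "\<forall>w. b w \<noteq> 0 \<longrightarrow> length w = n"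
    and "(a \<odot> b) w \<noteq> 0"
  then obtain k where "k \<le> length w" "a (take k w) \<noteq> 0" "b (drop k w) \<noteq> 0"
    unfolding smul_def by (metis (no_types, lifting) atMost_iff mult_eq_0_iff sum.neutral)
  then show "length w = m + n" using a b by fastforce
qed

lemma homog_wd: "homog (length u) (wd u)"
  by (simp add: homog_def wd_def)

lemma homog_lt: "homog 1 (lt g)"
  using homog_wd[of "[g]"] by (simp add: lt_def)

lemma homog_sadd: "homog m a \<Longrightarrow> homog m b \<Longrightarrow> homog m (sadd a b)"
  unfolding homog_def by (metis add.right_neutral sadd_apply)
lemma homog_ssub: "homog m a \<Longrightarrow> homog m b \<Longrightarrow> homog m (ssub a b)"
  unfolding homog_def by (metis diff_self ssub_apply)
lemma homog_sscal: "homog m a \<Longrightarrow> homog m (sscal c a)"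
  unfolding homog_def by (simp add: ser_apply)

lemma homog_rels: "r \<in> set rels \<Longrightarrow> homog 2 r"
proof -
  have "homog 2 (lt g \<odot> lt h)" for g h
    using homog_smul[OF homog_lt homog_lt, of g h] by (simp add: numeral_2_eq_2)
  then show "r \<in> set rels \<Longrightarrow> homog 2 r"
    unfolding rels_def comm_def by (auto intro!: homog_sadd homog_ssub simp: smul_ssub_left smul_ssub_right)
qed

lemma homog_ideal_gen: "r \<in> set rels \<Longrightarrow> homog (length u + 2 + length v) (wd u \<odot> r \<odot> wd v)"
  by (intro homog_smul homog_wd homog_rels)

lemma hom_homog: "homog s a \<Longrightarrow> hom s a = a"
  by (rule ext) (auto simp: hom_def homog_def)
lemma hom_homog_other: "homog m a \<Longrightarrow> m \<noteq> s \<Longrightarrow> hom s a = szero"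
  by (rule ext) (auto simp: hom_def homog_def ser_apply)

lemma homog_hom: "homog s (hom s a)" by (simp add: homog_def hom_def)

lemma hom_sadd: "hom s (sadd a b) = sadd (hom s a) (hom s b)"
  by (rule ext) (simp add: hom_def ser_apply)
lemma hom_ssub: "hom s (ssub a b) = ssub (hom s a) (hom s b)"
  by (rule ext) (simp add: hom_def ser_apply)
lemma hom_sscal: "hom s (sscal c a) = sscal c (hom s a)"
  by (rule ext) (simp add: hom_def ser_apply)

lemma idl_szero: "idl szero" using idl_zero by (simp add: szero_eq)

lemma idl_hom: "idl a \<Longrightarrow> idl (hom s a)"
proof (induction rule: idl.induct)
  case idl_zero then show ?case by (simp add: hom_def idl.idl_zero)
next
  case (idl_gen r u v)
  then show ?case
    using homog_ideal_gen[OF idl_gen] hom_homog hom_homog_other idl.idl_gen[OF idl_gen] idl_szero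
    by metis
next
  case (idl_add a b) then show ?case by (simp add: hom_sadd idl.idl_add)
next
  case (idl_scal a c) then show ?case by (simp add: hom_sscal idl.idl_scal)
qed

lemma idl_Nil: "idl a \<Longrightarrow> a [] = 0"
proof (induction rule: idl.induct)
  case (idl_gen r u v)
  then have "r [] = 0" using homog_rels[OF idl_gen] unfolding homog_def by force
  then show ?case by simp
qed (auto simp: ser_apply)

lemma idl_ssub: "idl a \<Longrightarrow> idl b \<Longrightarrow> idl (ssub a b)"
proof -
  assume "idl a" "idl b"
  then have "idl (sadd a (sscal (-1) b))" by (intro idl_add idl_scal)
  moreover have "sadd a (sscal (-1) b) = ssub a b" by (rule ext) (simp add: ser_apply)
  ultimately show ?thesis by simp
qed

lemma idl_sum: "finite I \<Longrightarrow> (\<forall>i\<in>I. idl (f i)) \<Longrightarrow> idl (\<lambda>w. \<Sum>i\<in>I. f i w)"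
proof (induction rule: finite_induct)
  case empty then show ?case by (simp add: idl_zero)
next
  case (insert x F)
  then have "idl (sadd (f x) (\<lambda>w. \<Sum>i\<in>F. f i w))" by (intro idl_add) auto
  moreover have "sadd (f x) (\<lambda>w. \<Sum>i\<in>F. f i w) = (\<lambda>w. \<Sum>i\<in>insert x F. f i w)"
    using insert by (simp add: sadd_def)
  ultimately show ?case by simp
qed

lemma idl_smul_wd_right: "idl x \<Longrightarrow> idl (x \<odot> wd v)"
proof (induction rule: idl.induct)
  case (idl_gen r u v')
  have "wd u \<odot> r \<odot> wd v' \<odot> wd v = wd u \<odot> r \<odot> wd (v' @ v)"
    by (simp add: smul_assoc wd_smul_wd)
  then show ?case using idl.idl_gen[OF idl_gen] by simp
qed (simp_all add: szero_eq idl_szero smul_sadd_left smul_sscal_left idl.idl_add idl.idl_scal)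

lemma idl_smul_wd_left: "idl x \<Longrightarrow> idl (wd u \<odot> x)"
proof (induction rule: idl.induct)
  case (idl_gen r u' v)
  have "wd u \<odot> (wd u' \<odot> r \<odot> wd v) = wd (u @ u') \<odot> r \<odot> wd v"
    by (simp add: smul_assoc wd_smul_wd[symmetric])
  then show ?case using idl.idl_gen[OF idl_gen] by simp
qed (simp_all add: szero_eq idl_szero smul_sadd_right smul_sscal_right idl.idl_add idl.idl_scal)

lemma idl_lt_left: "idl x \<Longrightarrow> idl (lt g \<odot> x)"
  unfolding lt_def by (rule idl_smul_wd_left)
lemma idl_lt_right: "idl x \<Longrightarrow> idl (x \<odot> lt g)"
  unfolding lt_def by (rule idl_smul_wd_right)

lemma idl_rel: "r \<in> set rels \<Longrightarrow> idl r"
  using idl_gen[of r "[]" "[]"] by (simp add: one_def[symmetric])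

definition words :: "nat \<Rightarrow> gen list set" where "words n = {w. length w = n}"

lemma finite_words: "finite (words n)"
proof -
  have "(UNIV :: gen set) = {Z1, Z11, Z2, Z22, Z12}" by (auto intro: gen.exhaust)
  then have "finite (UNIV :: gen set)" by (metis finite.emptyI finite.insertI)
  then show ?thesis using finite_lists_length_eq[of UNIV n] by (simp add: words_def)
qed

lemma words_0: "words 0 = {[]}" by (auto simp: words_def)

lemma hom_eq_sum_words: "hom j b = (\<lambda>w. \<Sum>v\<in>words j. (sscal (b v) (wd v)) w)"
proof (rule ext)
  fix w
  have "(\<Sum>v\<in>words j. sscal (b v) (wd v) w) = (\<Sum>v\<in>words j. if v = w then b w else 0)"
    by (rule sum.cong) (auto simp: wd_def ser_apply)
  also have "\<dots> = hom j b w"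
    using finite_words by (simp add: sum.delta' hom_def words_def)
  finally show "hom j b w = (\<Sum>v\<in>words j. sscal (b v) (wd v) w)" by simp
qed

lemma smul_sum_right: "finite I \<Longrightarrow> x \<odot> (\<lambda>w. \<Sum>i\<in>I. f i w) = (\<lambda>w. \<Sum>i\<in>I. (x \<odot> f i) w)"
  by (rule ext) (simp add: smul_def sum_distrib_left sum.swap[of _ I])
lemma smul_sum_left: "finite I \<Longrightarrow> (\<lambda>w. \<Sum>i\<in>I. f i w) \<odot> x = (\<lambda>w. \<Sum>i\<in>I. (f i \<odot> x) w)"
  by (rule ext) (simp add: smul_def sum_distrib_right sum.swap[of _ I])

lemma idl_smul_hom_right: "idl x \<Longrightarrow> idl (x \<odot> hom j b)"
  unfolding hom_eq_sum_words smul_sum_right[OF finite_words]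
  by (intro idl_sum finite_words ballI) (simp add: smul_sscal_right idl_scal idl_smul_wd_right)

lemma idl_smul_hom_left: "idl x \<Longrightarrow> idl (hom j b \<odot> x)"
  unfolding hom_eq_sum_words smul_sum_left[OF finite_words]
  by (intro idl_sum finite_words ballI) (simp add: smul_sscal_left idl_scal idl_smul_wd_left)

lemma hom_smul: "hom s (a \<odot> b) = (\<lambda>w. \<Sum>i\<le>s. (hom i a \<odot> hom (s - i) b) w)"
proof (rule ext)
  fix w
  have "(hom i a \<odot> hom j b) w = (if length w = i + j then a (take i w) * b (drop i w) else 0)"
    for i j
  proof -
    have "(hom i a \<odot> hom j b) w = (\<Sum>k\<le>length w. if k = i then
            (if length w = i + j then a (take i w) * b (drop i w) else 0) else 0)"
      unfolding smul_def by (rule sum.cong) (auto simp: hom_def)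
    then show ?thesis by (simp add: sum.delta)
  qed
  then show "hom s (a \<odot> b) w = (\<Sum>i\<le>s. (hom i a \<odot> hom (s - i) b) w)"
    by (cases "length w = s") (simp_all add: hom_def smul_def)
qed

lemma idl_hom_smul_left: "(\<forall>i. idl (hom i a)) \<Longrightarrow> idl (hom s (a \<odot> b))"
  unfolding hom_smul by (intro idl_sum ballI) (auto intro: idl_smul_hom_right)
lemma idl_hom_smul_right: "(\<forall>i. idl (hom i b)) \<Longrightarrow> idl (hom s (a \<odot> b))"
  unfolding hom_smul by (intro idl_sum ballI) (auto intro: idl_smul_hom_left)


lemma ueq_refl[simp]: "ueq a a"
proof -
  have "ssub a a = (\<lambda>_. 0)" by (rule ext) (simp add: ser_apply)
  then show ?thesis by (simp add: ueq_def hom_def idl_zero)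
qed

lemma ueq_sym: "ueq a b \<Longrightarrow> ueq b a"
proof -
  assume "ueq a b"
  then have "idl (hom s (sscal (-1) (ssub a b)))" for s by (simp add: ueq_def hom_sscal idl_scal)
  moreover have "sscal (-1) (ssub a b) = ssub b a" by (rule ext) (simp add: ser_apply)
  ultimately show ?thesis by (simp add: ueq_def)
qed

lemma ueq_trans[trans]: "ueq a b \<Longrightarrow> ueq b c \<Longrightarrow> ueq a c"
proof -
  assume "ueq a b" "ueq b c"
  then have "idl (hom s (sadd (ssub a b) (ssub b c)))" for s by (simp add: ueq_def hom_sadd idl_add)
  moreover have "sadd (ssub a b) (ssub b c) = ssub a c" by (rule ext) (simp add: ser_apply)
  ultimately show ?thesis by (simp add: ueq_def)
qed

lemma ueq_eq_trans[trans]: "ueq a b \<Longrightarrow> b = c \<Longrightarrow> ueq a c" by simp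
lemma eq_ueq_trans[trans]: "a = b \<Longrightarrow> ueq b c \<Longrightarrow> ueq a c" by simp

lemma ueq_sadd: "ueq a a' \<Longrightarrow> ueq b b' \<Longrightarrow> ueq (sadd a b) (sadd a' b')"
proof -
  assume "ueq a a'" "ueq b b'"
  then have "idl (hom s (sadd (ssub a a') (ssub b b')))" for s by (simp add: ueq_def hom_sadd idl_add)
  moreover have "sadd (ssub a a') (ssub b b') = ssub (sadd a b) (sadd a' b')"
    by (rule ext) (simp add: ser_apply)
  ultimately show ?thesis by (simp add: ueq_def)
qed

lemma ueq_ssub: "ueq a a' \<Longrightarrow> ueq b b' \<Longrightarrow> ueq (ssub a b) (ssub a' b')"
proof -
  assume "ueq a a'" "ueq b b'"
  then have "idl (hom s (ssub (ssub a a') (ssub b b')))" for s by (simp add: ueq_def hom_ssub idl_ssub)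
  moreover have "ssub (ssub a a') (ssub b b') = ssub (ssub a b) (ssub a' b')"
    by (rule ext) (simp add: ser_apply)
  ultimately show ?thesis by (simp add: ueq_def)
qed

lemma ueq_sscal: "ueq a a' \<Longrightarrow> ueq (sscal c a) (sscal c a')"
proof -
  assume "ueq a a'"
  then have "idl (hom s (sscal c (ssub a a')))" for s by (simp add: ueq_def hom_sscal idl_scal)
  moreover have "sscal c (ssub a a') = ssub (sscal c a) (sscal c a')"
    by (rule ext) (simp add: ser_apply algebra_simps)
  ultimately show ?thesis by (simp add: ueq_def)
qed

lemma ueq_smul_left: "ueq a a' \<Longrightarrow> ueq (a \<odot> b) (a' \<odot> b)"
  unfolding ueq_def smul_ssub_left[symmetric] by (intro allI idl_hom_smul_left) simp

lemma ueq_smul_right: "ueq b b' \<Longrightarrow> ueq (a \<odot> b) (a \<odot> b')"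
  unfolding ueq_def smul_ssub_right[symmetric] by (intro allI idl_hom_smul_right) simp

lemma ueq_Nil: "ueq a b \<Longrightarrow> a [] = b []"
proof -
  assume "ueq a b"
  then have "hom 0 (ssub a b) [] = 0" unfolding ueq_def by (blast intro: idl_Nil)
  then show ?thesis by (simp add: hom_def ser_apply)
qed

lemma ueq_cancel_right: "Q \<odot> Q' = one \<Longrightarrow> ueq (x \<odot> Q) (y \<odot> Q) \<Longrightarrow> ueq x y"
  by (drule ueq_smul_left[where b = Q']) (simp add: smul_assoc)

lemma ueq_cancel_left: "Q' \<odot> Q = one \<Longrightarrow> ueq (Q \<odot> x) (Q \<odot> y) \<Longrightarrow> ueq x y"
  by (drule ueq_smul_right[where a = Q']) (simp add: smul_assoc[symmetric])


section \<open>Testing equality modulo the ideal against linear functionals\<close>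

text \<open>In each degree the ideal is a subspace of the finite-dimensional space of homogeneous
  series, hence the common kernel of the functionals vanishing on it.  This reduces relations
  modulo the ideal to scalar equations, to which calculus applies.\<close>

definition pairing :: "nat \<Rightarrow> ser \<Rightarrow> ser \<Rightarrow> complex" where
  "pairing n c x = (\<Sum>w\<in>words n. c w * x w)"

definition lin_span :: "ser set \<Rightarrow> ser set" where
  "lin_span G = {x. \<exists>f. x = (\<lambda>w. \<Sum>g\<in>G. f g * g w)}"

lemma pairing_lin_comb:
  "finite G \<Longrightarrow> pairing n c (\<lambda>w. \<Sum>g\<in>G. f g * g w) = (\<Sum>g\<in>G. f g * pairing n c g)"
  unfolding pairing_def by (simp add: sum_distrib_left sum.swap[of _ G] mult_ac)

lemma pairing_sadd: "pairing n c (sadd a b) = pairing n c a + pairing n c b"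
  by (simp add: pairing_def ser_apply algebra_simps sum.distrib)
lemma pairing_ssub: "pairing n c (ssub a b) = pairing n c a - pairing n c b"
  by (simp add: pairing_def ser_apply algebra_simps sum_subtractf)
lemma pairing_sscal: "pairing n c (sscal k a) = k * pairing n c a"
  by (simp add: pairing_def ser_apply algebra_simps sum_distrib_left)
lemma pairing_hom: "pairing n c (hom n x) = pairing n c x"
  by (simp add: pairing_def hom_def words_def)
lemma pairing_0: "pairing 0 c x = c [] * x []"
  by (simp add: pairing_def words_0)

lemma mem_lin_span: "finite G \<Longrightarrow> g \<in> G \<Longrightarrow> g \<in> lin_span G"
proof -
  assume G: "finite G" "g \<in> G"
  have "g = (\<lambda>w. \<Sum>h\<in>G. (if h = g then 1 else 0) * h w)"
  proof (rule ext)
    fix w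
    have "(\<Sum>h\<in>G. (if h = g then 1 else 0) * h w) = (\<Sum>h\<in>G. if h = g then g w else 0)"
      by (rule sum.cong) auto
    then show "g w = (\<Sum>h\<in>G. (if h = g then 1 else 0) * h w)" using G by (simp add: sum.delta')
  qed
  then show ?thesis unfolding lin_span_def by (intro CollectI exI[of _ "\<lambda>h. if h = g then 1 else 0"])
qed

lemma lin_span_szero: "szero \<in> lin_span G"
  unfolding lin_span_def by (intro CollectI exI[of _ "\<lambda>_. 0"]) (simp add: szero_def)

lemma lin_span_sadd: "x \<in> lin_span G \<Longrightarrow> y \<in> lin_span G \<Longrightarrow> sadd x y \<in> lin_span G"
proof -
  assume "x \<in> lin_span G" "y \<in> lin_span G"
  then obtain f f' where "x = (\<lambda>w. \<Sum>g\<in>G. f g * g w)" "y = (\<lambda>w. \<Sum>g\<in>G. f' g * g w)"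
    by (auto simp: lin_span_def)
  then have "sadd x y = (\<lambda>w. \<Sum>g\<in>G. (f g + f' g) * g w)"
    by (auto simp: ser_apply algebra_simps sum.distrib)
  then show ?thesis unfolding lin_span_def by (intro CollectI exI[of _ "\<lambda>g. f g + f' g"])
qed

lemma lin_span_sscal: "x \<in> lin_span G \<Longrightarrow> sscal c x \<in> lin_span G"
proof -
  assume "x \<in> lin_span G"
  then obtain f where "x = (\<lambda>w. \<Sum>g\<in>G. f g * g w)" by (auto simp: lin_span_def)
  then have "sscal c x = (\<lambda>w. \<Sum>g\<in>G. (c * f g) * g w)"
    by (auto simp: ser_apply algebra_simps sum_distrib_left)
  then show ?thesis unfolding lin_span_def by (intro CollectI exI[of _ "\<lambda>g. c * f g"])
qed

lemma lin_span_insert: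
  assumes "finite G" "v \<notin> G"
  shows "x \<in> lin_span (insert v G) \<longleftrightarrow> (\<exists>a y. y \<in> lin_span G \<and> x = sadd (sscal a v) y)"
proof
  assume "x \<in> lin_span (insert v G)"
  then obtain f where "x = (\<lambda>w. \<Sum>g\<in>insert v G. f g * g w)" by (auto simp: lin_span_def)
  then have "x = sadd (sscal (f v) v) (\<lambda>w. \<Sum>g\<in>G. f g * g w)"
    using assms by (auto simp: ser_apply)
  then show "\<exists>a y. y \<in> lin_span G \<and> x = sadd (sscal a v) y" by (auto simp: lin_span_def)
next
  assume "\<exists>a y. y \<in> lin_span G \<and> x = sadd (sscal a v) y"
  then obtain a f where x: "x = sadd (sscal a v) (\<lambda>w. \<Sum>g\<in>G. f g * g w)"
    by (auto simp: lin_span_def)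
  have "(\<Sum>g\<in>G. (f(v := a)) g * g w) = (\<Sum>g\<in>G. f g * g w)" for w
    using assms by (intro sum.cong) auto
  then have "x = (\<lambda>w. \<Sum>g\<in>insert v G. (f(v := a)) g * g w)"
    using assms by (intro ext) (simp add: x ser_apply)
  then show "x \<in> lin_span (insert v G)" unfolding lin_span_def by (intro CollectI exI)
qed

definition cuts_out :: "nat \<Rightarrow> ser set \<Rightarrow> ser set \<Rightarrow> bool" where
  "cuts_out n \<Phi> S \<longleftrightarrow> (\<forall>x. homog n x \<longrightarrow> (x \<in> S \<longleftrightarrow> (\<forall>c\<in>\<Phi>. pairing n c x = 0)))"

lemma cuts_out_lin_span_empty: "\<exists>\<Phi>. cuts_out n \<Phi> (lin_span {})"
proof -
  define \<delta> where "\<delta> w0 = (\<lambda>w. if w = w0 then (1::complex) else 0)" for w0 :: "gen list"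
  have pairing_\<delta>: "pairing n (\<delta> w0) x = x w0" if "w0 \<in> words n" for w0 x
  proof -
    have "pairing n (\<delta> w0) x = (\<Sum>w\<in>words n. if w = w0 then x w0 else 0)"
      unfolding pairing_def \<delta>_def by (rule sum.cong) auto
    then show ?thesis using that finite_words by (simp add: sum.delta)
  qed
  have "x \<in> lin_span {} \<longleftrightarrow> (\<forall>c\<in>\<delta> ` words n. pairing n c x = 0)" if "homog n x" for x
  proof -
    have "x \<in> lin_span {} \<longleftrightarrow> x = szero" by (auto simp: lin_span_def szero_def)
    also have "\<dots> \<longleftrightarrow> (\<forall>w0\<in>words n. x w0 = 0)"
      using that by (auto simp: homog_def words_def szero_def)
    finally show ?thesis using pairing_\<delta> by simp
  qed
  then show ?thesis unfolding cuts_out_def by blast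
qed

lemma cuts_out_lin_span_insert:
  assumes G: "finite G" "v \<notin> G" "\<forall>g\<in>G. homog n g" and v: "homog n v"
    and \<Phi>: "cuts_out n \<Phi> (lin_span G)"
  shows "\<exists>\<Psi>. cuts_out n \<Psi> (lin_span (insert v G))"
proof -
  note span_insert = lin_span_insert[OF G(1,2)]
  have kernel_G: "pairing n c y = 0" if y: "y \<in> lin_span G" and c: "c \<in> \<Phi>" for y c
  proof -
    obtain f where y: "y = (\<lambda>w. \<Sum>g\<in>G. f g * g w)" using y unfolding lin_span_def by blast
    have "\<forall>g\<in>G. pairing n c g = 0"
      using \<Phi> c mem_lin_span[OF G(1)] G(3) unfolding cuts_out_def by blast
    then show ?thesis by (simp add: y pairing_lin_comb[OF G(1)])
  qed
  show ?thesis
  proof (cases "\<forall>c\<in>\<Phi>. pairing n c v = 0")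
    case True
    have "x \<in> lin_span (insert v G) \<longleftrightarrow> (\<forall>c\<in>\<Phi>. pairing n c x = 0)" if "homog n x" for x
    proof
      assume "x \<in> lin_span (insert v G)"
      then show "\<forall>c\<in>\<Phi>. pairing n c x = 0"
        using True kernel_G span_insert by (auto simp: pairing_sadd pairing_sscal)
    next
      assume "\<forall>c\<in>\<Phi>. pairing n c x = 0"
      then have "x \<in> lin_span G" using \<Phi> that by (simp add: cuts_out_def)
      moreover have "x = sadd (sscal 0 v) x" by (rule ext) (simp add: ser_apply)
      ultimately show "x \<in> lin_span (insert v G)" using span_insert by blast
    qed
    then show ?thesis unfolding cuts_out_def by blast
  next
    case False
    then obtain c0 where c0: "c0 \<in> \<Phi>" "pairing n c0 v \<noteq> 0" by blast
    \<comment> \<open>Gaussian elimination: correct every functional by a multiple of c0 so that it kills v.\<close>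
    define tr where "tr c = (\<lambda>w. c w - (pairing n c v / pairing n c0 v) * c0 w)" for c
    have "pairing n (\<lambda>w. c w - k * d w) x = pairing n c x - k * pairing n d x" for c d k x
      unfolding pairing_def by (simp add: algebra_simps sum_subtractf sum_distrib_left)
    then have pairing_tr:
      "pairing n (tr c) x = pairing n c x - (pairing n c v / pairing n c0 v) * pairing n c0 x" for c x
      unfolding tr_def .
    have "x \<in> lin_span (insert v G) \<longleftrightarrow> (\<forall>c\<in>tr ` \<Phi>. pairing n c x = 0)" if x: "homog n x" for x
    proof
      assume "x \<in> lin_span (insert v G)"
      then obtain a y where "y \<in> lin_span G" "x = sadd (sscal a v) y" using span_insert by blast
      then show "\<forall>c\<in>tr ` \<Phi>. pairing n c x = 0"
        using c0 kernel_G by (auto simp: pairing_tr pairing_sadd pairing_sscal)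
    next
      assume tr_kernel: "\<forall>c\<in>tr ` \<Phi>. pairing n c x = 0"
      define k where "k = pairing n c0 x / pairing n c0 v"
      define y where "y = ssub x (sscal k v)"
      have "homog n y" unfolding y_def by (intro homog_ssub homog_sscal x v)
      moreover have "pairing n c y = 0" if "c \<in> \<Phi>" for c
        using tr_kernel that c0
        by (auto simp: y_def pairing_ssub pairing_sscal k_def field_simps pairing_tr)
      ultimately have "y \<in> lin_span G" using \<Phi> by (simp add: cuts_out_def)
      moreover have "x = sadd (sscal k v) y" by (rule ext) (simp add: y_def ser_apply)
      ultimately show "x \<in> lin_span (insert v G)" using span_insert by blast
    qed
    then show ?thesis unfolding cuts_out_def by blast
  qed
qed

lemma cuts_out_lin_span: "finite G \<Longrightarrow> \<forall>g\<in>G. homog n g \<Longrightarrow> \<exists>\<Phi>. cuts_out n \<Phi> (lin_span G)"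
proof (induction rule: finite_induct)
  case (insert v G)
  then show ?case using cuts_out_lin_span_insert[of G v n] by blast
qed (rule cuts_out_lin_span_empty)

definition ideal_gens :: "nat \<Rightarrow> ser set" where
  "ideal_gens n = {wd u \<odot> r \<odot> wd v | u r v. r \<in> set rels \<and> length u + 2 + length v = n}"

lemma finite_ideal_gens: "finite (ideal_gens n)"
proof -
  have "ideal_gens n \<subseteq> (\<lambda>(u, r, v). wd u \<odot> r \<odot> wd v) `
          ({u. length u \<le> n} \<times> set rels \<times> {v. length v \<le> n})"
  proof
    fix x assume "x \<in> ideal_gens n"
    then obtain u r v where "x = wd u \<odot> r \<odot> wd v" "r \<in> set rels" "length u + 2 + length v = n"
      unfolding ideal_gens_def by blast
    then show "x \<in> (\<lambda>(u, r, v). wd u \<odot> r \<odot> wd v) `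
        ({u. length u \<le> n} \<times> set rels \<times> {v. length v \<le> n})"
      by (intro image_eqI[where x="(u, r, v)"]) auto
  qed
  moreover have "{u. length u \<le> n} = (\<Union>k\<le>n. words k)" by (auto simp: words_def)
  then have "finite {u :: gen list. length u \<le> n}" using finite_words by simp
  ultimately show ?thesis by (meson finite_SigmaI finite_imageI finite_set finite_subset)
qed

lemma homog_ideal_gens: "g \<in> ideal_gens n \<Longrightarrow> homog n g"
  unfolding ideal_gens_def using homog_ideal_gen by blast

lemma idl_lin_span_ideal_gens: "x \<in> lin_span (ideal_gens n) \<Longrightarrow> idl x"
proof -
  assume "x \<in> lin_span (ideal_gens n)"
  then obtain f where x: "x = (\<lambda>w. \<Sum>g\<in>ideal_gens n. sscal (f g) g w)"
    by (auto simp: lin_span_def sscal_def)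
  show ?thesis unfolding x
    by (intro idl_sum finite_ideal_gens ballI idl_scal) (auto simp: ideal_gens_def intro: idl_gen)
qed

lemma hom_idl_in_lin_span: "idl x \<Longrightarrow> hom n x \<in> lin_span (ideal_gens n)"
proof (induction rule: idl.induct)
  case idl_zero then show ?case using lin_span_szero by (simp add: hom_def szero_def)
next
  case (idl_gen r u v)
  show ?case
  proof (cases "n = length u + 2 + length v")
    case True
    then have "wd u \<odot> r \<odot> wd v \<in> ideal_gens n" using idl_gen by (auto simp: ideal_gens_def)
    then show ?thesis using hom_homog homog_ideal_gens mem_lin_span[OF finite_ideal_gens] by metis
  next
    case False
    then show ?thesis using homog_ideal_gen[OF idl_gen] hom_homog_other lin_span_szero by metis
  qed
qed (simp_all add: hom_sadd hom_sscal lin_span_sadd lin_span_sscal)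

definition annihilates :: "nat \<Rightarrow> ser \<Rightarrow> bool" where
  "annihilates n c \<longleftrightarrow> (\<forall>x. idl x \<longrightarrow> pairing n c x = 0)"

lemma idl_hom_iff_annihilators: "idl (hom n x) \<longleftrightarrow> (\<forall>c. annihilates n c \<longrightarrow> pairing n c x = 0)"
proof -
  obtain \<Phi> where \<Phi>: "\<forall>x. homog n x \<longrightarrow>
      (x \<in> lin_span (ideal_gens n) \<longleftrightarrow> (\<forall>c\<in>\<Phi>. pairing n c x = 0))"
    using cuts_out_lin_span[OF finite_ideal_gens] homog_ideal_gens unfolding cuts_out_def by blast
  have idl_iff: "idl (hom n y) \<longleftrightarrow> (\<forall>c\<in>\<Phi>. pairing n c y = 0)" for y
    using \<Phi> homog_hom idl_lin_span_ideal_gens hom_idl_in_lin_span hom_homog pairing_hom by metis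
  then have "annihilates n c" if "c \<in> \<Phi>" for c
    using that idl_hom by (auto simp: annihilates_def)
  then show ?thesis using idl_iff idl_hom pairing_hom by (metis annihilates_def)
qed

lemma pairing_ueq: "annihilates n c \<Longrightarrow> ueq a b \<Longrightarrow> pairing n c a = pairing n c b"
  unfolding ueq_def annihilates_def by (metis idl_hom_iff_annihilators annihilates_def
      pairing_ssub eq_iff_diff_eq_0)

lemma ueq_iff_pairings:
  "ueq a b \<longleftrightarrow> (\<forall>n c. annihilates n c \<longrightarrow> pairing n c a = pairing n c b)"
  unfolding ueq_def idl_hom_iff_annihilators by (simp add: pairing_ssub)


section \<open>Multiplication by a letter and the operators of the equations\<close>

lemma smul_lt_apply: "(x \<odot> lt g) w = (if w \<noteq> [] \<and> last w = g then x (butlast w) else 0)"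
proof -
  have "x (take k w) * lt g (drop k w) = (if k = length w - 1 then
          (if w \<noteq> [] \<and> last w = g then x (butlast w) else 0) else 0)" for k
  proof (cases "drop k w = [g]")
    case True
    have "length w - k = 1" using arg_cong[OF True, of length] by simp
    then have k: "k = length w - 1" "w \<noteq> []" by auto
    moreover have "last w = g" using True by (metis append_take_drop_id last_snoc)
    ultimately show ?thesis using True by (simp add: lt_def wd_def butlast_conv_take)
  next
    case False
    have "\<not> (k = length w - 1 \<and> w \<noteq> [] \<and> last w = g)"
    proof
      assume A: "k = length w - 1 \<and> w \<noteq> [] \<and> last w = g"
      then obtain u where "w = u @ [g]" by (metis append_butlast_last_id)
      then show False using A False by simp
    qed
    then show ?thesis using False by (auto simp: lt_def wd_def)
  qed
  then show ?thesis by (simp add: smul_def sum.delta)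
qed

lemma pairing_lt_left: "pairing (Suc m) c (lt g \<odot> x) = pairing m (\<lambda>u. c (g # u)) x"
proof -
  have sub: "Cons g ` words m \<subseteq> words (Suc m)" by (auto simp: words_def)
  have "pairing (Suc m) c (lt g \<odot> x) = (\<Sum>w\<in>words (Suc m). if w \<in> Cons g ` words m then c w * x (tl w) else 0)"
    unfolding pairing_def by (rule sum.cong[OF refl]) (auto simp: lt_smul_apply words_def neq_Nil_conv)
  also have "\<dots> = (\<Sum>w\<in>Cons g ` words m. c w * x (tl w))"
    by (simp only: sum.inter_restrict[OF finite_words, symmetric] Int_absorb1[OF sub])
  also have "\<dots> = pairing m (\<lambda>u. c (g # u)) x"
    by (subst sum.reindex) (auto simp: pairing_def)
  finally show ?thesis .
qed

lemma pairing_lt_right: "pairing (Suc m) c (x \<odot> lt g) = pairing m (\<lambda>u. c (u @ [g])) x"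
proof -
  have sub: "(\<lambda>u. u @ [g]) ` words m \<subseteq> words (Suc m)" by (auto simp: words_def)
  have "w \<in> words (Suc m) \<and> w \<noteq> [] \<and> last w = g \<longleftrightarrow> w \<in> (\<lambda>u. u @ [g]) ` words m" for w
    by (cases w rule: rev_cases) (auto simp: words_def)
  then have "pairing (Suc m) c (x \<odot> lt g) =
      (\<Sum>w\<in>words (Suc m). if w \<in> (\<lambda>u. u @ [g]) ` words m then c w * x (butlast w) else 0)"
    unfolding pairing_def by (intro sum.cong[OF refl]) (auto simp: smul_lt_apply)
  also have "\<dots> = (\<Sum>w\<in>(\<lambda>u. u @ [g]) ` words m. c w * x (butlast w))"
    by (simp only: sum.inter_restrict[OF finite_words, symmetric] Int_absorb1[OF sub])
  also have "\<dots> = pairing m (\<lambda>u. c (u @ [g])) x"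
    by (subst sum.reindex) (auto simp: pairing_def inj_on_def)
  finally show ?thesis .
qed

text \<open>A letter multiplies from the left (\<open>b = True\<close>) or from the right (\<open>b = False\<close>);
  the dual operation on functionals strips that letter.\<close>

definition letter_mul :: "bool \<Rightarrow> gen \<Rightarrow> ser \<Rightarrow> ser" where
  "letter_mul b g X = (if b then lt g \<odot> X else X \<odot> lt g)"

definition letter_dual :: "bool \<Rightarrow> gen \<Rightarrow> ser \<Rightarrow> ser" where
  "letter_dual b g c = (if b then (\<lambda>u. c (g # u)) else (\<lambda>u. c (u @ [g])))"

lemma pairing_letter_mul: "pairing (Suc m) c (letter_mul b g X) = pairing m (letter_dual b g c) X"
  by (simp add: letter_mul_def letter_dual_def pairing_lt_left pairing_lt_right)

lemma pairing_0_letter_mul: "pairing 0 c (letter_mul b g X) = 0"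
  by (simp add: letter_mul_def pairing_0 smul_lt_apply)

lemma annihilates_letter_dual: "annihilates (Suc m) c \<Longrightarrow> annihilates m (letter_dual b g c)"
  unfolding annihilates_def letter_mul_def
  by (metis pairing_letter_mul letter_mul_def idl_lt_left idl_lt_right)

type_synonym term_list = "((complex \<Rightarrow> complex \<Rightarrow> complex) \<times> bool \<times> gen) list"

text \<open>Modulo the ideal, the holomorphic part \<open>X\<close> of a solution \<open>X z\<^sup>Z\<close> of each equation
  considered satisfies \<open>X' = letter_op T p z X\<close>, where \<open>p\<close> is the passive variable.\<close>

definition letter_op :: "term_list \<Rightarrow> complex \<Rightarrow> complex \<Rightarrow> ser \<Rightarrow> ser" where
  "letter_op T p z X = (\<lambda>w. \<Sum>(q, b, g)\<leftarrow>T. q p z * letter_mul b g X w)"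

lemma letter_op_Nil: "letter_op [] p z X = szero"
  by (simp add: letter_op_def szero_def)

lemma letter_op_Cons:
  "letter_op ((q, b, g) # T) p z X = sadd (sscal (q p z) (letter_mul b g X)) (letter_op T p z X)"
  by (rule ext) (simp add: letter_op_def ser_apply)

lemma letter_op_ssub: "letter_op T p z (ssub X Y) = ssub (letter_op T p z X) (letter_op T p z Y)"
proof (induction T)
  case Nil then show ?case by (rule ext) (simp add: letter_op_Nil ser_apply)
next
  case (Cons t T)
  obtain q b g where t: "t = (q, b, g)" by (cases t) auto
  have "letter_mul b g (ssub X Y) = ssub (letter_mul b g X) (letter_mul b g Y)"
    by (simp add: letter_mul_def smul_ssub_left smul_ssub_right)
  then show ?case unfolding t letter_op_Cons Cons by (intro ext) (simp add: ser_apply algebra_simps)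
qed

lemma pairing_letter_op:
  "pairing (Suc m) c (letter_op T p z X) = (\<Sum>(q, b, g)\<leftarrow>T. q p z * pairing m (letter_dual b g c) X)"
proof (induction T)
  case (Cons t T)
  obtain q b g where t: "t = (q, b, g)" by (cases t) auto
  show ?case unfolding t letter_op_Cons by (simp add: pairing_sadd pairing_sscal pairing_letter_mul Cons)
qed (simp add: letter_op_Nil pairing_def szero_def)

lemma pairing_0_letter_op: "pairing 0 c (letter_op T p z X) = 0"
proof (induction T)
  case (Cons t T)
  obtain q b g where t: "t = (q, b, g)" by (cases t) auto
  show ?case unfolding t letter_op_Cons by (simp add: pairing_sadd pairing_sscal pairing_0_letter_mul Cons)
qed (simp add: letter_op_Nil pairing_def szero_def)

lemma pairing_letter_op_eq_0:
  assumes "annihilates n c" and "\<And>m. n = Suc m \<Longrightarrow> idl (hom m X)"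
  shows "pairing n c (letter_op T p z X) = 0"
proof (cases n)
  case (Suc m)
  have "pairing m (letter_dual b g c) X = 0" for b g
    using assms Suc annihilates_letter_dual pairing_hom by (metis annihilates_def)
  moreover have "(\<Sum>(q, b, g)\<leftarrow>T. (0::complex)) = 0" by (induction T) auto
  ultimately show ?thesis using Suc by (simp add: pairing_letter_op case_prod_beta)
qed (simp add: pairing_0_letter_op)


section \<open>Coefficientwise derivatives\<close>

definition has_sderiv :: "(complex \<Rightarrow> ser) \<Rightarrow> complex \<Rightarrow> ser \<Rightarrow> bool" where
  "has_sderiv F z F' \<longleftrightarrow> (\<forall>w. ((\<lambda>t. F t w) has_field_derivative F' w) (at z))"

lemma has_sderiv_imp_sderiv: "has_sderiv F z F' \<Longrightarrow> sderiv F z = F'"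
  unfolding has_sderiv_def sderiv_def by (auto intro!: ext DERIV_imp_deriv)

lemma has_sderiv_sderiv: "has_sderiv F z F' \<Longrightarrow> has_sderiv F z (sderiv F z)"
  using has_sderiv_imp_sderiv by metis

lemma holomorphic_has_sderiv:
  assumes "\<forall>w. (\<lambda>t. F t w) holomorphic_on S" "open S" "z \<in> S"
  shows "has_sderiv F z (sderiv F z)"
  unfolding has_sderiv_def sderiv_def using assms by (auto intro: holomorphic_derivI)

lemma has_sderiv_smul:
  assumes "has_sderiv F z F'" "has_sderiv G z G'"
  shows "has_sderiv (\<lambda>t. F t \<odot> G t) z (sadd (F' \<odot> G z) (F z \<odot> G'))"
  unfolding has_sderiv_def
proof
  fix w
  have "((\<lambda>t. \<Sum>k\<le>length w. F t (take k w) * G t (drop k w)) has_field_derivative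
        (\<Sum>k\<le>length w. F' (take k w) * G z (drop k w) + F z (take k w) * G' (drop k w))) (at z)"
    using assms unfolding has_sderiv_def
    by (intro DERIV_sum) (auto intro!: derivative_eq_intros simp: algebra_simps)
  then show "((\<lambda>t. (F t \<odot> G t) w) has_field_derivative sadd (F' \<odot> G z) (F z \<odot> G') w) (at z)"
    by (simp add: smul_def ser_apply sum.distrib)
qed

lemma has_sderiv_const: "has_sderiv (\<lambda>_. C) z szero"
  by (simp add: has_sderiv_def szero_apply)

lemma has_sderiv_smul_const_right: "has_sderiv F z F' \<Longrightarrow> has_sderiv (\<lambda>t. F t \<odot> C) z (F' \<odot> C)"
  using has_sderiv_smul[OF _ has_sderiv_const] by simp

lemma has_sderiv_smul_const_left: "has_sderiv F z F' \<Longrightarrow> has_sderiv (\<lambda>t. C \<odot> F t) z (C \<odot> F')"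
  using has_sderiv_smul[OF has_sderiv_const] by simp

lemma has_sderiv_ssub:
  "has_sderiv F z F' \<Longrightarrow> has_sderiv G z G' \<Longrightarrow> has_sderiv (\<lambda>t. ssub (F t) (G t)) z (ssub F' G')"
  by (auto simp: has_sderiv_def ser_apply intro!: derivative_eq_intros)

lemma pairing_has_field_derivative:
  "has_sderiv F z F' \<Longrightarrow> ((\<lambda>t. pairing n c (F t)) has_field_derivative pairing n c F') (at z)"
  unfolding has_sderiv_def pairing_def by (auto intro!: derivative_eq_intros DERIV_sum)

lemma pairing_holomorphic_on:
  "\<forall>w. (\<lambda>z. F z w) holomorphic_on S \<Longrightarrow> (\<lambda>z. pairing n c (F z)) holomorphic_on S"
  unfolding pairing_def by (intro holomorphic_intros) auto

lemma smul_holomorphic_on: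
  assumes "\<forall>w. (\<lambda>t. F t w) holomorphic_on S" "\<forall>w. (\<lambda>t. G t w) holomorphic_on S"
  shows "\<forall>w. (\<lambda>t. (F t \<odot> G t) w) holomorphic_on S"
  using assms unfolding smul_def by (auto intro!: holomorphic_intros)

lemma ueq_has_sderiv:
  assumes S: "open S" "z \<in> S" and F: "has_sderiv F z F'" and G: "has_sderiv G z G'"
    and FG: "\<forall>t\<in>S. ueq (F t) (G t)"
  shows "ueq F' G'"
proof (unfold ueq_iff_pairings, intro allI impI)
  fix n c assume c: "annihilates n c"
  have "((\<lambda>t. pairing n c (G t)) has_field_derivative pairing n c F') (at z)"
    by (rule has_field_derivative_transform_within_open[OF pairing_has_field_derivative[OF F] S])
      (use FG pairing_ueq[OF c] in auto)
  then show "pairing n c F' = pairing n c G'"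
    using pairing_has_field_derivative[OF G] DERIV_unique by blast
qed

section \<open>Exponentials of letters and commutation modulo the ideal\<close>

definition sexp :: "gen \<Rightarrow> complex \<Rightarrow> ser" where
  "sexp g a = (\<lambda>w. if w = replicate (length w) g then a ^ length w / fact (length w) else 0)"

lemma zpow_eq_sexp: "zpow g z = sexp g (Ln z)"
  by (simp add: zpow_def sexp_def)

lemma zpow_Nil: "zpow g z [] = 1" by (simp add: zpow_def)

lemma replicate_iff: "(u = replicate (length u) g) \<longleftrightarrow> (\<forall>y\<in>set u. y = g)"
  by (metis in_set_replicate replicate_length_same)

lemma sexp_add: "sexp g a \<odot> sexp g b = sexp g (a + b)"
proof (rule ext)
  fix w
  show "(sexp g a \<odot> sexp g b) w = sexp g (a + b) w"
  proof (cases "w = replicate (length w) g")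
    case True
    define n where "n = length w"
    have "(sexp g a \<odot> sexp g b) w = (\<Sum>k\<le>n. a ^ k / fact k * (b ^ (n - k) / fact (n - k)))"
      unfolding smul_def n_def[symmetric]
    proof (rule sum.cong[OF refl])
      fix k assume "k \<in> {..n}"
      then have "take k w = replicate k g" "drop k w = replicate (n - k) g"
        using True n_def by (metis atMost_iff take_replicate min.absorb1, metis drop_replicate)
      then show "sexp g a (take k w) * sexp g b (drop k w) = a ^ k / fact k * (b ^ (n - k) / fact (n - k))"
        by (simp add: sexp_def)
    qed
    also have "\<dots> = (\<Sum>k\<le>n. of_nat (n choose k) * a ^ k * b ^ (n - k)) / fact n"
      by (simp add: sum_divide_distrib binomial_fact field_simps)
    also have "\<dots> = (a + b) ^ n / fact n"
      by (simp add: binomial_ring)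
    finally show ?thesis using True by (simp add: sexp_def n_def)
  next
    case False
    have "sexp g a (take k w) * sexp g b (drop k w) = 0" for k
    proof -
      have "set w = set (take k w) \<union> set (drop k w)" by (metis append_take_drop_id set_append)
      then have "\<not> (take k w = replicate (length (take k w)) g \<and> drop k w = replicate (length (drop k w)) g)"
        using False unfolding replicate_iff by auto
      then show ?thesis by (auto simp: sexp_def)
    qed
    then have "(sexp g a \<odot> sexp g b) w = 0" unfolding smul_def by (intro sum.neutral) blast
    then show ?thesis using False by (simp add: sexp_def)
  qed
qed

lemma sexp_0: "sexp g 0 = one"
  by (rule ext) (auto simp: sexp_def one_def wd_def)

lemma zpow_inverse: "zpow g z \<odot> sexp g (- Ln z) = one" "sexp g (- Ln z) \<odot> zpow g z = one"
  by (simp_all add: zpow_eq_sexp sexp_add sexp_0)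

lemma zpow_has_sderiv:
  assumes z: "z \<notin> \<real>\<^sub>\<le>\<^sub>0"
  shows "has_sderiv (zpow g) z (sscal (1 / z) (lt g \<odot> zpow g z))"
  unfolding has_sderiv_def
proof
  fix w
  have lt_sexp: "(lt g \<odot> sexp g a) w = (if w \<noteq> [] \<and> w = replicate (length w) g
      then a ^ (length w - 1) / fact (length w - 1) else 0)" for a
    by (cases w) (auto simp: lt_smul_apply sexp_def)
  show "((\<lambda>t. zpow g t w) has_field_derivative sscal (1 / z) (lt g \<odot> zpow g z) w) (at z)"
  proof (cases "w = replicate (length w) g \<and> w \<noteq> []")
    case True
    then obtain m where m: "length w = Suc m" by (cases w) auto
    have "((\<lambda>t. Ln t ^ Suc m / fact (Suc m)) has_field_derivative
            (of_nat (Suc m) * (inverse z * Ln z ^ (Suc m - Suc 0)) / fact (Suc m))) (at z)"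
      by (intro DERIV_cdivide DERIV_power has_field_derivative_Ln z)
    moreover have "of_nat (Suc m) * (inverse z * Ln z ^ (Suc m - Suc 0)) / fact (Suc m)
        = 1 / z * (Ln z ^ m / fact m)"
    proof -
      have "(of_nat (Suc m) :: complex) \<noteq> 0" by (simp only: of_nat_eq_0_iff)
      then have "of_nat (Suc m) * (inverse z * Ln z ^ m) / (of_nat (Suc m) * fact m)
          = (inverse z * Ln z ^ m) / fact m" by (rule mult_divide_mult_cancel_left)
      then show ?thesis by (simp only: fact_Suc diff_Suc_Suc diff_zero) (simp add: divide_inverse mult.assoc)
    qed
    moreover have "sscal (1 / z) (lt g \<odot> zpow g z) w = 1 / z * (Ln z ^ m / fact m)"
      unfolding ser_apply zpow_eq_sexp lt_sexp using True m by simp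
    moreover have "(\<lambda>t. zpow g t w) = (\<lambda>t. Ln t ^ Suc m / fact (Suc m))"
      using True m by (auto simp: zpow_def)
    ultimately show ?thesis by simp
  next
    case False
    have "sscal (1 / z) (lt g \<odot> zpow g z) w = 0"
      unfolding ser_apply zpow_eq_sexp lt_sexp using False by auto
    moreover have "(\<lambda>t. zpow g t w) = (\<lambda>t. if w = [] then 1 else 0)"
      using False by (auto simp: zpow_def)
    ultimately show ?thesis by simp
  qed
qed


definition ucommutes :: "ser \<Rightarrow> ser \<Rightarrow> bool" where
  "ucommutes a b \<longleftrightarrow> ueq (a \<odot> b) (b \<odot> a)"

lemma ucommutes_sym: "ucommutes a b \<Longrightarrow> ucommutes b a"
  by (simp add: ucommutes_def ueq_sym)

lemma ucommutes_smul: "ucommutes a x \<Longrightarrow> ucommutes a y \<Longrightarrow> ucommutes a (x \<odot> y)"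
proof -
  assume ax: "ucommutes a x" and ay: "ucommutes a y"
  have "a \<odot> (x \<odot> y) = (a \<odot> x) \<odot> y" by (simp add: smul_assoc)
  also have "ueq \<dots> ((x \<odot> a) \<odot> y)" using ax by (simp add: ucommutes_def ueq_smul_left)
  also have "(x \<odot> a) \<odot> y = x \<odot> (a \<odot> y)" by (simp add: smul_assoc)
  also have "ueq \<dots> (x \<odot> (y \<odot> a))" using ay by (simp add: ucommutes_def ueq_smul_right)
  also have "x \<odot> (y \<odot> a) = (x \<odot> y) \<odot> a" by (simp add: smul_assoc)
  finally show ?thesis by (simp add: ucommutes_def)
qed

lemma ucommutes_replicate: "ucommutes a (lt g) \<Longrightarrow> ucommutes a (wd (replicate n g))"
proof (induction n)
  case 0 then show ?case by (simp add: ucommutes_def one_def[symmetric])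
next
  case (Suc n)
  have "wd (replicate (Suc n) g) = lt g \<odot> wd (replicate n g)"
    by (simp add: lt_def wd_smul_wd)
  then show ?case using Suc ucommutes_smul by simp
qed

lemma homog_apply: "homog n a \<Longrightarrow> length w \<noteq> n \<Longrightarrow> a w = 0"
  by (auto simp: homog_def)

lemma smul_graded_sum_right:
  assumes V: "\<And>n. homog n (V n)" and P: "\<And>w. P w = (\<Sum>n\<le>length w. d n * V n w)"
  shows "(a \<odot> P) w = (\<Sum>n\<le>length w. d n * (a \<odot> V n) w)"
proof -
  have "P (drop k w) = (\<Sum>n\<le>length w. d n * V n (drop k w))" for k
    unfolding P by (intro sum.mono_neutral_left) (auto simp: homog_apply[OF V])
  then have "(a \<odot> P) w = (\<Sum>k\<le>length w. \<Sum>n\<le>length w. a (take k w) * (d n * V n (drop k w)))"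
    unfolding smul_def by (simp add: sum_distrib_left)
  also have "\<dots> = (\<Sum>n\<le>length w. d n * (a \<odot> V n) w)"
    by (subst sum.swap) (simp add: smul_def sum_distrib_left mult_ac)
  finally show ?thesis .
qed

lemma smul_graded_sum_left:
  assumes V: "\<And>n. homog n (V n)" and P: "\<And>w. P w = (\<Sum>n\<le>length w. d n * V n w)"
  shows "(P \<odot> a) w = (\<Sum>n\<le>length w. d n * (V n \<odot> a) w)"
proof -
  have "P (take k w) = (\<Sum>n\<le>length w. d n * V n (take k w))" for k
    unfolding P by (intro sum.mono_neutral_left) (auto simp: homog_apply[OF V])
  then have "(P \<odot> a) w = (\<Sum>k\<le>length w. \<Sum>n\<le>length w. (d n * V n (take k w)) * a (drop k w))"
    unfolding smul_def by (simp add: sum_distrib_right)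
  also have "\<dots> = (\<Sum>n\<le>length w. d n * (V n \<odot> a) w)"
    by (subst sum.swap) (simp add: smul_def sum_distrib_left mult_ac)
  finally show ?thesis .
qed

lemma ucommutes_sexp:
  assumes "ucommutes a (lt g)"
  shows "ucommutes a (sexp g c)"
proof -
  define V where "V n = wd (replicate n g)" for n
  define d where "d n = (c ^ n / fact n :: complex)" for n
  have V: "homog n (V n)" for n using homog_wd[of "replicate n g"] by (simp add: V_def)
  have P: "sexp g c w = (\<Sum>n\<le>length w. d n * V n w)" for w
  proof -
    have "(\<Sum>n\<le>length w. d n * V n w) = (\<Sum>n\<le>length w. if n = length w then sexp g c w else 0)"
      by (rule sum.cong[OF refl]) (auto simp: V_def d_def wd_def sexp_def)
    then show ?thesis by simp
  qed
  have "hom s (ssub (a \<odot> sexp g c) (sexp g c \<odot> a))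
      = (\<lambda>w. \<Sum>n\<le>s. sscal (d n) (hom s (ssub (a \<odot> V n) (V n \<odot> a))) w)" for s
    by (rule ext) (simp add: hom_def ser_apply smul_graded_sum_right[OF V P]
        smul_graded_sum_left[OF V P] sum_subtractf algebra_simps)
  moreover have "idl (\<lambda>w. \<Sum>n\<le>s. sscal (d n) (hom s (ssub (a \<odot> V n) (V n \<odot> a))) w)" for s
    using ucommutes_replicate[OF assms]
    by (intro idl_sum ballI idl_scal) (auto simp: ucommutes_def ueq_def V_def)
  ultimately show ?thesis by (simp add: ucommutes_def ueq_def)
qed

lemma ucommutes_zpow: "ucommutes a (lt g) \<Longrightarrow> ucommutes a (zpow g z)"
  by (simp add: zpow_eq_sexp ucommutes_sexp)

lemma ucommutes_of_relation: "comm (lt g) (lt h) \<in> set rels \<Longrightarrow> ucommutes (lt g) (lt h)"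
  unfolding ucommutes_def ueq_def using idl_rel idl_hom comm_def by metis

lemma ucommutes_Z1_Z2: "ucommutes (lt Z1) (lt Z2)"
  by (rule ucommutes_of_relation) (simp add: rels_def)
lemma ucommutes_Z11_Z2: "ucommutes (lt Z11) (lt Z2)"
  by (rule ucommutes_of_relation) (simp add: rels_def)
lemma ucommutes_Z1_Z22: "ucommutes (lt Z1) (lt Z22)"
  by (rule ucommutes_of_relation) (simp add: rels_def)

declare sum.cong[fundef_cong]

function sinverse :: "ser \<Rightarrow> gen list \<Rightarrow> complex" where
  "sinverse a [] = 1 / a []"
| "sinverse a (x # w) = - (\<Sum>k\<in>{..length w}. a (x # take k w) * sinverse a (drop k w)) / a []"
  by pat_completeness auto
termination by (relation "Wellfounded.measure (\<lambda>(a, w). length w)") auto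

lemma smul_sinverse: "a [] \<noteq> 0 \<Longrightarrow> a \<odot> sinverse a = one"
proof (rule ext)
  fix w assume a0: "a [] \<noteq> 0"
  show "(a \<odot> sinverse a) w = one w"
  proof (cases w)
    case (Cons x u)
    have "(sshift x a \<odot> sinverse a) u = (\<Sum>k\<in>{..length u}. a (x # take k u) * sinverse a (drop k u))"
      by (simp add: smul_def sshift_def)
    then show ?thesis using a0 Cons by (simp add: smul_Cons one_def)
  qed (use a0 in \<open>simp add: one_def\<close>)
qed

lemma sinverse_smul: "a [] \<noteq> 0 \<Longrightarrow> sinverse a \<odot> a = one"
proof -
  assume a0: "a [] \<noteq> 0"
  then have b0: "sinverse a [] \<noteq> 0" by simp
  have "a = a \<odot> (sinverse a \<odot> sinverse (sinverse a))" using smul_sinverse[of "sinverse a", OF b0] by simp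
  also have "\<dots> = sinverse (sinverse a)" by (simp add: smul_assoc[symmetric] smul_sinverse[of a, OF a0])
  finally have "sinverse a \<odot> a = sinverse a \<odot> sinverse (sinverse a)" by simp
  then show ?thesis using smul_sinverse[of "sinverse a", OF b0] by simp
qed


lemma open_slit: "open (slit r)"
proof -
  have "closed {z::complex. Im z = 0 \<and> Re z \<le> 0}"
    by (intro closed_Collect_conj closed_Collect_eq closed_Collect_le continuous_intros)
  then show ?thesis unfolding slit_def by (intro open_Diff open_ball)
qed

lemma slit_subset_ball: "slit r \<subseteq> ball 0 r" by (auto simp: slit_def)

lemma slit_imp_ball: "z \<in> slit r \<Longrightarrow> z \<in> ball 0 r" by (auto simp: slit_def)

lemma slit_not_nonpos_Reals: "z \<in> slit r \<Longrightarrow> z \<notin> \<real>\<^sub>\<le>\<^sub>0"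
  by (auto simp: slit_def complex_nonpos_Reals_iff)

lemma slit_nonzero: "z \<in> slit r \<Longrightarrow> z \<noteq> 0"
  by (auto simp: slit_def)

lemma slit_mono: "r \<le> r' \<Longrightarrow> slit r \<subseteq> slit r'"
  by (auto simp: slit_def)

lemma of_real_in_slit: "0 < t \<Longrightarrow> t < r \<Longrightarrow> complex_of_real t \<in> slit r"
  by (auto simp: slit_def)

lemma closed_segment_subset_slit:
  assumes a: "0 < a" "a < r" and z: "z \<in> slit r"
  shows "closed_segment (complex_of_real a) z \<subseteq> slit r"
proof
  fix x assume x: "x \<in> closed_segment (complex_of_real a) z"
  then obtain u where u: "0 \<le> u" "u \<le> 1" "x = (1 - u) *\<^sub>R complex_of_real a + u *\<^sub>R z"
    by (auto simp: closed_segment_def)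
  have "complex_of_real a \<in> ball 0 r" "z \<in> ball 0 r" using a z by (auto simp: slit_def)
  then have "x \<in> ball 0 r" using x convex_ball[of "0::complex" r] closed_segment_subset by blast
  moreover have "\<not> (Im x = 0 \<and> Re x \<le> 0)"
  proof
    assume A: "Im x = 0 \<and> Re x \<le> 0"
    have Im_x: "Im x = u * Im z" and Re_x: "Re x = (1 - u) * a + u * Re z" using u by simp_all
    show False
    proof (cases "u = 0")
      case False
      then have "Re z > 0" using A Im_x z by (auto simp: slit_def)
      moreover have "(1 - u) * a \<ge> 0" using u a by simp
      ultimately have "Re x > 0" using Re_x u False by (smt (verit) mult_pos_pos)
      then show False using A by simp
    qed (use A Re_x a in simp)
  qed
  ultimately show "x \<in> slit r" by (simp add: slit_def)
qed

lemma connected_slit: "0 < r \<Longrightarrow> connected (slit r)"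
proof -
  assume r: "0 < r"
  have "starlike (slit r)"
    unfolding starlike_def
    using closed_segment_subset_slit[of "r/2" r] of_real_in_slit[of "r/2" r] r by force
  then show ?thesis by (rule starlike_imp_connected)
qed

lemma slit_sequence:
  assumes r: "0 < r"
  shows "(\<lambda>k. complex_of_real (r / (real k + 2))) \<longlonglongrightarrow> 0"
    and "complex_of_real (r / (real k + 2)) \<in> slit r"
    and "complex_of_real (r / (real k + 2)) \<in> cball 0 (r / 2)"
proof -
  have "(\<lambda>k. r / (real k + 2)) \<longlonglongrightarrow> 0" by real_asymp
  from tendsto_of_real[OF this] show "(\<lambda>k. complex_of_real (r / (real k + 2))) \<longlonglongrightarrow> 0"
    by (simp only: of_real_0)
  have le: "r / (real k + 2) \<le> r / 2" using r by (intro divide_left_mono) auto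
  have pos: "0 < r / (real k + 2)" using r by simp
  show "complex_of_real (r / (real k + 2)) \<in> slit r"
    using le pos r by (intro of_real_in_slit) linarith+
  show "complex_of_real (r / (real k + 2)) \<in> cball 0 (r / 2)"
    using le pos by (simp only: mem_cball_0 norm_of_real abs_of_pos)
qed

lemma value_at_0_from_slit:
  assumes r: "0 < r" and f: "isCont f 0" and const: "\<And>z. z \<in> slit r \<Longrightarrow> f z = c"
  shows "f 0 = (c :: complex)"
proof -
  define t where "t k = complex_of_real (r / (real k + 2))" for k
  have "(\<lambda>k. f (t k)) \<longlonglongrightarrow> f 0"
    using isCont_tendsto_compose[OF f slit_sequence(1)[OF r]] by (simp add: t_def)
  moreover have "(\<lambda>k. f (t k)) = (\<lambda>k. c)"
    using const slit_sequence(2)[OF r] by (simp add: t_def)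
  ultimately show ?thesis using LIMSEQ_unique tendsto_const by metis
qed

section \<open>Uniqueness of normalized solutions\<close>

lemma letter_op_solution_zero:
  assumes r: "0 < r"
    and D: "\<forall>w. (\<lambda>z. D z w) holomorphic_on ball 0 r"
    and D0: "ueq (D 0) szero"
    and eq: "\<forall>z\<in>slit r. ueq (sderiv D z) (letter_op T p z (D z))"
  shows "\<forall>z\<in>slit r. ueq (D z) szero"
proof -
  have "\<forall>z\<in>slit r. idl (hom n (D z))" for n
  proof (induction n rule: less_induct)
    case (less n)
    show ?case
    proof (intro ballI, unfold idl_hom_iff_annihilators, intro allI impI)
      fix z c assume z: "z \<in> slit r" and c: "annihilates n c"
      define f where "f t = pairing n c (D t)" for t
      have f: "f holomorphic_on ball 0 r" unfolding f_def by (rule pairing_holomorphic_on[OF D])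
      have "(f has_field_derivative 0) (at t)" if t: "t \<in> slit r - {}" for t
      proof -
        have "t \<in> ball 0 r" using t slit_imp_ball by blast
        then have "(f has_field_derivative pairing n c (sderiv D t)) (at t)"
          unfolding f_def by (intro pairing_has_field_derivative holomorphic_has_sderiv[OF D]) auto
        moreover have "pairing n c (sderiv D t) = pairing n c (letter_op T p t (D t))"
          using eq t c pairing_ueq by auto
        moreover have "pairing n c (letter_op T p t (D t)) = 0"
          using less t c by (intro pairing_letter_op_eq_0) auto
        ultimately show ?thesis by simp
      qed
      moreover have "continuous_on (slit r) f"
        using holomorphic_on_imp_continuous_on[OF f] slit_subset_ball continuous_on_subset by blast
      ultimately obtain c0 where c0: "\<And>t. t \<in> slit r \<Longrightarrow> f t = c0"
        using DERIV_zero_connected_constant[OF connected_slit[OF r] open_slit finite.emptyI] by blast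
      have "isCont f 0"
        using holomorphic_on_imp_continuous_on[OF f] r by (simp add: continuous_on_eq_continuous_at)
      then have "f 0 = c0" by (rule value_at_0_from_slit[OF r]) (rule c0)
      moreover have "f 0 = 0" using pairing_ueq[OF c D0] by (simp add: f_def pairing_def szero_def)
      ultimately show "pairing n c (D z) = 0" using c0[OF z] by (simp add: f_def)
    qed
  qed
  moreover have "ssub (D z) szero = D z" for z by (rule ext) (simp add: ser_apply)
  ultimately show ?thesis by (simp add: ueq_def)
qed

lemma letter_op_solution_unique:
  assumes r: "0 < r"
    and X: "\<forall>w. (\<lambda>z. X z w) holomorphic_on ball 0 r"
    and Y: "\<forall>w. (\<lambda>z. Y z w) holomorphic_on ball 0 r"
    and XY0: "ueq (X 0) (Y 0)"
    and eqX: "\<forall>z\<in>slit r. ueq (sderiv X z) (letter_op T p z (X z))"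
    and eqY: "\<forall>z\<in>slit r. ueq (sderiv Y z) (letter_op T p z (Y z))"
  shows "\<forall>z\<in>slit r. ueq (X z) (Y z)"
proof -
  define D where "D z = ssub (X z) (Y z)" for z
  have D: "\<forall>w. (\<lambda>z. D z w) holomorphic_on ball 0 r"
    using X Y by (auto simp: D_def ser_apply intro!: holomorphic_intros)
  have "ueq (D 0) (ssub (Y 0) (Y 0))" unfolding D_def by (rule ueq_ssub[OF XY0 ueq_refl])
  moreover have "ssub (Y 0) (Y 0) = szero" by (rule ext) (simp add: ser_apply)
  ultimately have D0: "ueq (D 0) szero" by simp
  have "ueq (sderiv D z) (letter_op T p z (D z))" if z: "z \<in> slit r" for z
  proof -
    have zb: "z \<in> ball 0 r" using z by (rule slit_imp_ball)
    have "sderiv D z = ssub (sderiv X z) (sderiv Y z)"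
      unfolding D_def by (intro has_sderiv_imp_sderiv has_sderiv_ssub
          holomorphic_has_sderiv[OF X open_ball zb] holomorphic_has_sderiv[OF Y open_ball zb])
    also have "ueq \<dots> (ssub (letter_op T p z (X z)) (letter_op T p z (Y z)))"
      using eqX eqY z by (intro ueq_ssub) auto
    also have "ssub (letter_op T p z (X z)) (letter_op T p z (Y z)) = letter_op T p z (D z)"
      by (simp add: D_def letter_op_ssub)
    finally show ?thesis .
  qed
  then have "\<forall>z\<in>slit r. ueq (D z) szero" by (intro letter_op_solution_zero[OF r D D0]) auto
  moreover have "ueq (D z) szero \<Longrightarrow> ueq (X z) (Y z)" for z
  proof -
    assume "ueq (D z) szero"
    then have "ueq (sadd (D z) (Y z)) (sadd szero (Y z))" by (rule ueq_sadd) simp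
    moreover have "sadd (D z) (Y z) = X z" by (rule ext) (simp add: D_def ser_apply)
    ultimately show ?thesis by simp
  qed
  ultimately show ?thesis by blast
qed


section \<open>Restriction of a solution to the axis \<open>z\<^sub>1 = 0\<close>\<close>

lemma tendsto_sum_list:
  fixes f :: "'a \<Rightarrow> nat \<Rightarrow> complex"
  shows "(\<And>x. x \<in> set T \<Longrightarrow> (\<lambda>k. f x k) \<longlonglongrightarrow> l x) \<Longrightarrow> (\<lambda>k. \<Sum>x\<leftarrow>T. f x k) \<longlonglongrightarrow> (\<Sum>x\<leftarrow>T. l x)"
  by (induction T) (auto intro!: tendsto_add)

lemma uniformly_bounded_sum_list:
  fixes f :: "'a \<Rightarrow> nat \<Rightarrow> 'b \<Rightarrow> complex"
  assumes "\<And>x. x \<in> set T \<Longrightarrow> \<exists>M. \<forall>k. \<forall>\<xi>\<in>S. norm (f x k \<xi>) \<le> M"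
  shows "\<exists>M. \<forall>k. \<forall>\<xi>\<in>S. norm (\<Sum>x\<leftarrow>T. f x k \<xi>) \<le> M"
  using assms
proof (induction T)
  case (Cons x T)
  obtain M1 where M1: "\<forall>k. \<forall>\<xi>\<in>S. norm (f x k \<xi>) \<le> M1" using Cons.prems[of x] by auto
  obtain M2 where M2: "\<forall>k. \<forall>\<xi>\<in>S. norm (\<Sum>x\<leftarrow>T. f x k \<xi>) \<le> M2" using Cons by auto
  have "norm (\<Sum>x\<leftarrow>x # T. f x k \<xi>) \<le> M1 + M2" if "\<xi> \<in> S" for k \<xi>
  proof -
    have "norm (\<Sum>x\<leftarrow>x # T. f x k \<xi>) \<le> norm (f x k \<xi>) + norm (\<Sum>x\<leftarrow>T. f x k \<xi>)"
      by (simp add: norm_triangle_ineq)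
    also have "\<dots> \<le> M1 + M2" using M1 M2 that by (intro add_mono) auto
    finally show ?thesis .
  qed
  then show ?case by blast
qed auto

text \<open>The \<open>z\<^sub>2\<close>-equation of \<open>H\<close> holds only off the axis, and \<open>H\<close> is only separately
  holomorphic.  Still, integrating the equation along a segment in the slit disc and letting
  \<open>z\<^sub>1 \<rightarrow> 0\<close> (dominated convergence, with bounds obtained degree by degree) shows that
  \<open>H(0, \<cdot>)\<close> solves the limiting equation.\<close>

locale axis_restriction =
  fixes r :: real and H :: "complex \<Rightarrow> complex \<Rightarrow> ser" and T :: term_list and A :: "complex \<Rightarrow> ser"
  assumes r_pos: "0 < r"
    and H_holo1: "\<And>w z2. z2 \<in> ball 0 r \<Longrightarrow> (\<lambda>z1. H z1 z2 w) holomorphic_on ball 0 r"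
    and H_holo2: "\<And>w z1. z1 \<in> ball 0 r \<Longrightarrow> (\<lambda>z2. H z1 z2 w) holomorphic_on ball 0 r"
    and H_Nil: "\<And>z1 z2. z1 \<in> ball 0 r \<Longrightarrow> z2 \<in> ball 0 r \<Longrightarrow> H z1 z2 [] = 1"
    and H_eq: "\<And>z1 z2. z1 \<in> slit r \<Longrightarrow> z2 \<in> slit r \<Longrightarrow>
               ueq (sderiv (H z1) z2) (letter_op T z1 z2 (H z1 z2))"
    and T_continuous: "\<And>q b g. (q, b, g) \<in> set T \<Longrightarrow>
               continuous_on (cball 0 (r/2) \<times> (ball 0 r - {0})) (\<lambda>p. q (fst p) (snd p))"
    and A_holo: "\<And>w. (\<lambda>z. A z w) holomorphic_on ball 0 r"
    and A_Nil: "\<And>z. z \<in> ball 0 r \<Longrightarrow> A z [] = 1"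
    and A_0: "ueq (A 0) (H 0 0)"
    and A_eq: "\<And>z. z \<in> slit r \<Longrightarrow> ueq (sderiv A z) (letter_op T 0 z (A z))"
begin

definition a :: complex where "a = complex_of_real (r / 2)"
definition t :: "nat \<Rightarrow> complex" where "t k = complex_of_real (r / (real k + 2))"

lemma a_in_slit: "a \<in> slit r"
  unfolding a_def using r_pos by (intro of_real_in_slit) auto

lemma t_in_slit: "t k \<in> slit r" and t_in_cball: "t k \<in> cball 0 (r/2)" and t_tendsto: "t \<longlonglongrightarrow> 0"
  using slit_sequence[OF r_pos] unfolding t_def by auto

lemma segment_in_slit: "z \<in> slit r \<Longrightarrow> closed_segment a z \<subseteq> slit r"
  unfolding a_def using r_pos by (intro closed_segment_subset_slit) auto

definition rhs :: "nat \<Rightarrow> ser \<Rightarrow> complex \<Rightarrow> complex \<Rightarrow> complex" where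
  "rhs m c z1 \<xi> = (\<Sum>(q, b, g)\<leftarrow>T. q z1 \<xi> * pairing m (letter_dual b g c) (H z1 \<xi>))"

lemma pairing_H_has_derivative:
  assumes c: "annihilates (Suc m) c" and z1: "z1 \<in> slit r" and \<xi>: "\<xi> \<in> slit r"
  shows "((\<lambda>\<xi>. pairing (Suc m) c (H z1 \<xi>)) has_field_derivative rhs m c z1 \<xi>) (at \<xi>)"
proof -
  have "\<forall>w. (\<lambda>z2. H z1 z2 w) holomorphic_on ball 0 r" using H_holo2 slit_imp_ball z1 by blast
  then have "((\<lambda>\<xi>. pairing (Suc m) c (H z1 \<xi>)) has_field_derivative
      pairing (Suc m) c (sderiv (H z1) \<xi>)) (at \<xi>)"
    by (rule pairing_has_field_derivative[OF holomorphic_has_sderiv[OF _ open_ball slit_imp_ball[OF \<xi>]],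
          unfolded eta_contract_eq])
  moreover have "pairing (Suc m) c (sderiv (H z1) \<xi>) = pairing (Suc m) c (letter_op T z1 \<xi> (H z1 \<xi>))"
    using pairing_ueq[OF c H_eq[OF z1 \<xi>]] .
  ultimately show ?thesis by (simp add: pairing_letter_op rhs_def)
qed

lemma pairing_H_contour_integral:
  assumes c: "annihilates (Suc m) c" and z1: "z1 \<in> slit r" and \<zeta>: "\<zeta> \<in> slit r"
  shows "(rhs m c z1 has_contour_integral
           (pairing (Suc m) c (H z1 \<zeta>) - pairing (Suc m) c (H z1 a))) (linepath a \<zeta>)"
proof -
  have "(rhs m c z1 has_contour_integral
        ((\<lambda>\<xi>. pairing (Suc m) c (H z1 \<xi>)) (pathfinish (linepath a \<zeta>)) -
         (\<lambda>\<xi>. pairing (Suc m) c (H z1 \<xi>)) (pathstart (linepath a \<zeta>)))) (linepath a \<zeta>)"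
    by (rule contour_integral_primitive[where S="slit r"])
      (use pairing_H_has_derivative[OF c z1] segment_in_slit[OF \<zeta>] in
        \<open>auto intro: has_field_derivative_at_within\<close>)
  then show ?thesis by simp
qed

lemma pairing_H_tendsto:
  assumes "\<xi> \<in> ball 0 r"
  shows "(\<lambda>k. pairing m c (H (t k) \<xi>)) \<longlonglongrightarrow> pairing m c (H 0 \<xi>)"
proof -
  have "(\<lambda>z1. pairing m c (H z1 \<xi>)) holomorphic_on ball 0 r"
    using H_holo1[OF assms] by (intro pairing_holomorphic_on) blast
  then have "continuous_on (ball 0 r) (\<lambda>z1. pairing m c (H z1 \<xi>))"
    by (rule holomorphic_on_imp_continuous_on)
  then have "isCont (\<lambda>z1. pairing m c (H z1 \<xi>)) 0"
    using r_pos by (simp add: continuous_on_eq_continuous_at)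
  then show ?thesis using isCont_tendsto_compose t_tendsto by blast
qed

lemma coefficient_bounded:
  assumes "(q, b, g) \<in> set T" "z \<in> slit r"
  shows "\<exists>Q. \<forall>p\<in>cball 0 (r/2) \<times> closed_segment a z. norm (q (fst p) (snd p)) \<le> Q"
proof -
  have "cball 0 (r/2) \<times> closed_segment a z \<subseteq> cball 0 (r/2) \<times> (ball 0 r - {0})"
    using segment_in_slit[OF assms(2)] slit_imp_ball slit_nonzero by blast
  then have "continuous_on (cball 0 (r/2) \<times> closed_segment a z) (\<lambda>p. q (fst p) (snd p))"
    using T_continuous[OF assms(1)] continuous_on_subset by blast
  then have "compact ((\<lambda>p. q (fst p) (snd p)) ` (cball 0 (r/2) \<times> closed_segment a z))"
    by (intro compact_continuous_image compact_Times compact_cball compact_segment)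
  then have "bounded ((\<lambda>p. q (fst p) (snd p)) ` (cball 0 (r/2) \<times> closed_segment a z))"
    by (rule compact_imp_bounded)
  then show ?thesis unfolding bounded_iff by auto
qed

lemma rhs_tendsto:
  assumes "\<xi> \<in> slit r"
  shows "(\<lambda>k. rhs m c (t k) \<xi>) \<longlonglongrightarrow> rhs m c 0 \<xi>"
  unfolding rhs_def
proof (rule tendsto_sum_list)
  fix x assume x: "x \<in> set T"
  obtain q b g where x_eq: "x = (q, b, g)" by (cases x) auto
  have "((\<lambda>k. (\<lambda>p. q (fst p) (snd p)) (t k, \<xi>)) \<longlongrightarrow> (\<lambda>p. q (fst p) (snd p)) (0, \<xi>)) sequentially"
  proof (rule continuous_on_tendsto_compose[OF T_continuous[OF x[unfolded x_eq]]])
    show "((\<lambda>k. (t k, \<xi>)) \<longlongrightarrow> (0, \<xi>)) sequentially" by (intro tendsto_Pair t_tendsto tendsto_const)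
    show "(0, \<xi>) \<in> cball 0 (r/2) \<times> (ball 0 r - {0})"
      using r_pos assms slit_imp_ball slit_nonzero by auto
    show "\<forall>\<^sub>F k in sequentially. (t k, \<xi>) \<in> cball 0 (r/2) \<times> (ball 0 r - {0})"
      using t_in_cball assms slit_imp_ball slit_nonzero by auto
  qed
  then show "(\<lambda>k. case x of (q, b, g) \<Rightarrow> q (t k) \<xi> * pairing m (letter_dual b g c) (H (t k) \<xi>))
        \<longlonglongrightarrow> (case x of (q, b, g) \<Rightarrow> q 0 \<xi> * pairing m (letter_dual b g c) (H 0 \<xi>))"
    unfolding x_eq using pairing_H_tendsto[OF slit_imp_ball[OF assms]] by (simp add: tendsto_mult)
qed

lemma rhs_bounded:
  assumes c: "annihilates (Suc m) c" and z: "z \<in> slit r"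
    and lower: "\<And>c'. annihilates m c' \<Longrightarrow>
        \<exists>B. \<forall>k. \<forall>\<zeta>\<in>closed_segment a z. norm (pairing m c' (H (t k) \<zeta>)) \<le> B"
  shows "\<exists>M. \<forall>k. \<forall>\<xi>\<in>closed_segment a z. norm (rhs m c (t k) \<xi>) \<le> M"
  unfolding rhs_def
proof (rule uniformly_bounded_sum_list)
  fix x assume x: "x \<in> set T"
  obtain q b g where x_eq: "x = (q, b, g)" by (cases x) auto
  obtain Q where Q: "\<forall>p\<in>cball 0 (r/2) \<times> closed_segment a z. norm (q (fst p) (snd p)) \<le> Q"
    using coefficient_bounded x x_eq z by blast
  obtain B where B: "\<forall>k. \<forall>\<zeta>\<in>closed_segment a z. norm (pairing m (letter_dual b g c) (H (t k) \<zeta>)) \<le> B"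
    using lower[OF annihilates_letter_dual[OF c]] by blast
  have "norm (q (t k) \<xi> * pairing m (letter_dual b g c) (H (t k) \<xi>)) \<le> Q * B"
    if "\<xi> \<in> closed_segment a z" for k \<xi>
    using Q t_in_cball B that by (simp add: norm_mult mult_mono')
  then show "\<exists>M. \<forall>k. \<forall>\<xi>\<in>closed_segment a z.
      norm (case x of (q, b, g) \<Rightarrow> q (t k) \<xi> * pairing m (letter_dual b g c) (H (t k) \<xi>)) \<le> M"
    unfolding x_eq by auto
qed

lemma pairing_H_bounded:
  "annihilates m c \<Longrightarrow> z \<in> slit r \<Longrightarrow>
     \<exists>B. \<forall>k. \<forall>\<zeta>\<in>closed_segment a z. norm (pairing m c (H (t k) \<zeta>)) \<le> B"
proof (induction m arbitrary: c)
  case 0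
  have "pairing 0 c (H (t k) \<zeta>) = c []" if "\<zeta> \<in> closed_segment a z" for k \<zeta>
    using H_Nil[OF slit_imp_ball[OF t_in_slit] slit_imp_ball] segment_in_slit[OF 0(2)] that
    by (auto simp: pairing_0)
  then show ?case by auto
next
  case (Suc m)
  note c = Suc.prems(1) and z = Suc.prems(2)
  obtain M0 where M0: "\<forall>k. \<forall>\<xi>\<in>closed_segment a z. norm (rhs m c (t k) \<xi>) \<le> M0"
    using rhs_bounded[OF c z Suc.IH[OF _ z]] by blast
  define M where "M = max M0 0"
  have M: "\<forall>k. \<forall>\<xi>\<in>closed_segment a z. norm (rhs m c (t k) \<xi>) \<le> M" "0 \<le> M"
    using M0 by (auto simp: M_def intro: le_max_iff_disj[THEN iffD2])
  have "Bseq (\<lambda>k. pairing (Suc m) c (H (t k) a))"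
    using pairing_H_tendsto[OF slit_imp_ball[OF a_in_slit]] convergent_imp_Bseq convergentI by blast
  then obtain K where K: "\<forall>k. norm (pairing (Suc m) c (H (t k) a)) \<le> K" unfolding Bseq_def by blast
  have "norm (pairing (Suc m) c (H (t k) \<zeta>)) \<le> K + M * norm (z - a)"
    if \<zeta>: "\<zeta> \<in> closed_segment a z" for k \<zeta>
  proof -
    have seg: "closed_segment a \<zeta> \<subseteq> closed_segment a z" using \<zeta> by (simp add: subset_closed_segment)
    have "norm (pairing (Suc m) c (H (t k) \<zeta>) - pairing (Suc m) c (H (t k) a)) \<le> M * norm (\<zeta> - a)"
      using has_contour_integral_bound_linepath[OF pairing_H_contour_integral[OF c t_in_slit]
          M(2)] segment_in_slit[OF z] \<zeta> seg M by blast
    also have "\<dots> \<le> M * norm (z - a)"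
      using dist_in_closed_segment[OF \<zeta>] M(2)
      by (intro mult_left_mono) (auto simp: dist_norm norm_minus_commute)
    finally show ?thesis using K[rule_format, of k] norm_triangle_sub[of "pairing (Suc m) c (H (t k) \<zeta>)"
          "pairing (Suc m) c (H (t k) a)"] by linarith
  qed
  then show ?case by blast
qed

lemma pairing_H_differences_tendsto:
  assumes c: "annihilates (Suc m) c" and \<zeta>: "\<zeta> \<in> slit r"
    and J: "(rhs m c 0 has_contour_integral J) (linepath a \<zeta>)"
  shows "(\<lambda>k. pairing (Suc m) c (H (t k) \<zeta>) - pairing (Suc m) c (H (t k) a)) \<longlonglongrightarrow> J"
proof -
  define I where "I k = pairing (Suc m) c (H (t k) \<zeta>) - pairing (Suc m) c (H (t k) a)" for k
  define f where "f k x = rhs m c (t k) (linepath a \<zeta> x) * (\<zeta> - a)" for k x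
  define g where "g x = rhs m c 0 (linepath a \<zeta> x) * (\<zeta> - a)" for x
  have fI: "(f k has_integral I k) {0..1}" for k
    using pairing_H_contour_integral[OF c t_in_slit \<zeta>, of k]
    unfolding has_contour_integral_linepath f_def I_def .
  have gI: "(g has_integral J) {0..1}"
    using J unfolding has_contour_integral_linepath g_def .
  obtain M where M: "\<forall>k. \<forall>\<xi>\<in>closed_segment a \<zeta>. norm (rhs m c (t k) \<xi>) \<le> M"
    using rhs_bounded[OF c \<zeta> pairing_H_bounded[OF _ \<zeta>]] by blast
  have "(\<lambda>k. integral {0..1} (f k)) \<longlonglongrightarrow> integral {0..1} g"
  proof (rule dominated_convergence(2)[where h="\<lambda>x. M * norm (\<zeta> - a)"])
    show "f k integrable_on {0..1}" for k using fI by blast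
    show "(\<lambda>x::real. M * norm (\<zeta> - a)) integrable_on {0..1}"
      using integrable_const[of "M * norm (\<zeta> - a)" "0::real" 1] by (simp add: cbox_interval)
    show "norm (f k x) \<le> M * norm (\<zeta> - a)" if "x \<in> {0..1}" for k x
      using M linepath_in_path[OF that, of a \<zeta>] by (simp add: f_def norm_mult mult_right_mono)
    show "(\<lambda>k. f k x) \<longlonglongrightarrow> g x" if "x \<in> {0..1}" for x
      using linepath_in_path[OF that] segment_in_slit[OF \<zeta>]
      unfolding f_def g_def by (intro tendsto_mult_right rhs_tendsto) blast
  qed
  then show ?thesis using integral_unique[OF fI] integral_unique[OF gI] by (simp add: I_def)
qed

lemma pairing_A_contour_integral:
  assumes c: "annihilates (Suc m) c"
    and lower: "\<forall>z\<in>slit r. idl (hom m (ssub (H 0 z) (A z)))"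
    and \<zeta>: "\<zeta> \<in> slit r"
  shows "(rhs m c 0 has_contour_integral
           (pairing (Suc m) c (A \<zeta>) - pairing (Suc m) c (A a))) (linepath a \<zeta>)"
proof -
  define gA where "gA \<xi> = pairing (Suc m) c (A \<xi>)" for \<xi>
  have "(gA has_field_derivative rhs m c 0 \<xi>) (at \<xi>)" if \<xi>: "\<xi> \<in> slit r" for \<xi>
  proof -
    have "(gA has_field_derivative pairing (Suc m) c (sderiv A \<xi>)) (at \<xi>)"
      unfolding gA_def using A_holo
      by (intro pairing_has_field_derivative holomorphic_has_sderiv[OF _ open_ball slit_imp_ball[OF \<xi>]]) auto
    moreover have "pairing (Suc m) c (sderiv A \<xi>) = pairing (Suc m) c (letter_op T 0 \<xi> (A \<xi>))"
      using pairing_ueq[OF c A_eq[OF \<xi>]] .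
    moreover have "pairing m (letter_dual b g c) (A \<xi>) = pairing m (letter_dual b g c) (H 0 \<xi>)" for b g
      using annihilates_letter_dual[OF c] lower \<xi>
      by (metis annihilates_def eq_iff_diff_eq_0 pairing_hom pairing_ssub)
    ultimately show ?thesis by (simp add: pairing_letter_op rhs_def)
  qed
  then have "(rhs m c 0 has_contour_integral
      (gA (pathfinish (linepath a \<zeta>)) - gA (pathstart (linepath a \<zeta>)))) (linepath a \<zeta>)"
    by (intro contour_integral_primitive[where S="slit r"])
      (use segment_in_slit[OF \<zeta>] in \<open>auto intro: has_field_derivative_at_within\<close>)
  then show ?thesis by (simp add: gA_def)
qed

lemma restriction_step:
  assumes c: "annihilates (Suc m) c"
    and lower: "\<forall>z\<in>slit r. idl (hom m (ssub (H 0 z) (A z)))"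
    and \<zeta>: "\<zeta> \<in> slit r"
  shows "pairing (Suc m) c (H 0 \<zeta>) - pairing (Suc m) c (A \<zeta>)
       = pairing (Suc m) c (H 0 a) - pairing (Suc m) c (A a)"
proof -
  have "(\<lambda>k. pairing (Suc m) c (H (t k) \<zeta>) - pairing (Suc m) c (H (t k) a))
      \<longlonglongrightarrow> pairing (Suc m) c (A \<zeta>) - pairing (Suc m) c (A a)"
    by (rule pairing_H_differences_tendsto[OF c \<zeta> pairing_A_contour_integral[OF c lower \<zeta>]])
  moreover have "(\<lambda>k. pairing (Suc m) c (H (t k) \<zeta>) - pairing (Suc m) c (H (t k) a))
      \<longlonglongrightarrow> pairing (Suc m) c (H 0 \<zeta>) - pairing (Suc m) c (H 0 a)"
    by (intro tendsto_diff pairing_H_tendsto slit_imp_ball \<zeta> a_in_slit)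
  ultimately show ?thesis using LIMSEQ_unique by (fastforce simp: algebra_simps)
qed

theorem restriction_eq_solution: "z \<in> slit r \<Longrightarrow> ueq (H 0 z) (A z)"
proof -
  have "\<forall>z\<in>slit r. idl (hom n (ssub (H 0 z) (A z)))" for n
  proof (induction n)
    case 0
    have "ssub (H 0 z) (A z) [] = 0" if "z \<in> slit r" for z
      using H_Nil[of 0 z] A_Nil[of z] r_pos slit_imp_ball[OF that] by (simp add: ser_apply)
    then have "hom 0 (ssub (H 0 z) (A z)) = szero" if "z \<in> slit r" for z
      using that by (intro ext) (simp add: hom_def szero_def)
    then show ?case using idl_szero by simp
  next
    case (Suc m)
    show ?case
    proof (intro ballI, unfold idl_hom_iff_annihilators, intro allI impI)
      fix z c assume z: "z \<in> slit r" and c: "annihilates (Suc m) c"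
      define f where "f \<xi> = pairing (Suc m) c (H 0 \<xi>) - pairing (Suc m) c (A \<xi>)" for \<xi>
      have "isCont f 0"
        unfolding f_def using r_pos H_holo2[of 0] A_holo holomorphic_on_imp_continuous_on
        by (intro continuous_intros continuous_on_interior[of "ball 0 r"]
            pairing_holomorphic_on[THEN holomorphic_on_imp_continuous_on]) auto
      then have "f 0 = f a"
        by (rule value_at_0_from_slit[OF r_pos]) (use restriction_step[OF c Suc] in \<open>simp add: f_def\<close>)
      moreover have "f 0 = 0" using pairing_ueq[OF c A_0] by (simp add: f_def)
      ultimately show "pairing (Suc m) c (ssub (H 0 z) (A z)) = 0"
        using restriction_step[OF c Suc z] by (simp add: f_def pairing_ssub)
    qed
  qed
  then show "z \<in> slit r \<Longrightarrow> ueq (H 0 z) (A z)" by (simp add: ueq_def)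
qed

end


section \<open>Equations for the holomorphic part of a solution\<close>

lemma holomorphic_part_equation:
  assumes S: "open S" "z \<in> S" and z: "z \<notin> \<real>\<^sub>\<le>\<^sub>0"
    and X: "\<forall>w. (\<lambda>t. X t w) holomorphic_on S"
    and L: "has_sderiv L z L'" and L_eq: "ueq L' (Om \<odot> L z)"
    and LX: "\<forall>t\<in>S. ueq (L t) (X t \<odot> zpow g t \<odot> Q)" and Q: "Q [] \<noteq> 0"
  shows "ueq (sderiv X z) (ssub (Om \<odot> X z) (sscal (1 / z) (X z \<odot> lt g)))"
proof -
  define X' where "X' = sderiv X z"
  define Y' where "Y' = sadd (X' \<odot> zpow g z) (X z \<odot> sscal (1 / z) (lt g \<odot> zpow g z))"
  have "has_sderiv (\<lambda>t. X t \<odot> zpow g t \<odot> Q) z (Y' \<odot> Q)"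
    unfolding Y'_def X'_def
    by (intro has_sderiv_smul_const_right has_sderiv_smul holomorphic_has_sderiv[OF X S] zpow_has_sderiv z)
  then have "ueq (Y' \<odot> Q) L'" by (rule ueq_sym[OF ueq_has_sderiv[OF S L _ LX]])
  also have "ueq L' (Om \<odot> L z)" by (fact L_eq)
  also have "ueq (Om \<odot> L z) (Om \<odot> (X z \<odot> zpow g z \<odot> Q))" using LX S by (intro ueq_smul_right) auto
  also have "Om \<odot> (X z \<odot> zpow g z \<odot> Q) = (Om \<odot> (X z \<odot> zpow g z)) \<odot> Q" by (simp add: smul_assoc)
  finally have "ueq Y' (Om \<odot> (X z \<odot> zpow g z))"
    by (rule ueq_cancel_right[OF smul_sinverse[of Q, OF Q]])
  also have "Y' = sadd X' (sscal (1 / z) (X z \<odot> lt g)) \<odot> zpow g z"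
    by (simp add: Y'_def smul_sadd_left smul_sscal_left smul_sscal_right smul_assoc)
  finally have "ueq (sadd X' (sscal (1 / z) (X z \<odot> lt g))) (Om \<odot> X z)"
    by (subst (asm) smul_assoc[symmetric]) (rule ueq_cancel_right[OF zpow_inverse(1)])
  from ueq_ssub[OF this ueq_refl, of "sscal (1 / z) (X z \<odot> lt g)"] show ?thesis
    unfolding X'_def by (simp add: ssub_def sadd_def)
qed

lemma letter_op_ucommutes_left:
  assumes "\<forall>(q, b, g)\<in>set T. q p z = 0 \<or> ucommutes (lt h) (lt g)"
  shows "ueq (lt h \<odot> letter_op T p z X) (letter_op T p z (lt h \<odot> X))"
  using assms
proof (induction T)
  case Nil then show ?case by (simp add: letter_op_Nil)
next
  case (Cons x T)
  obtain q b g where x: "x = (q, b, g)" by (cases x) auto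
  have "ueq (sscal (q p z) (lt h \<odot> letter_mul b g X)) (sscal (q p z) (letter_mul b g (lt h \<odot> X)))"
  proof (cases "q p z = 0")
    case False
    then have "ucommutes (lt h) (lt g)" using Cons.prems x by auto
    then have "ueq (lt h \<odot> lt g \<odot> X) (lt g \<odot> lt h \<odot> X)" by (simp add: ucommutes_def ueq_smul_left)
    then show ?thesis by (simp add: letter_mul_def smul_assoc ueq_sscal)
  qed (simp add: sscal_def)
  moreover have "ueq (lt h \<odot> letter_op T p z X) (letter_op T p z (lt h \<odot> X))" using Cons by auto
  ultimately show ?case
    unfolding x letter_op_Cons smul_sadd_right smul_sscal_right by (rule ueq_sadd)
qed

lemma letter_op_smul_right:
  assumes "\<forall>(q, b, g)\<in>set T. b \<or> ucommutes (lt g) C"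
  shows "ueq (letter_op T p z X \<odot> C) (letter_op T p z (X \<odot> C))"
  using assms
proof (induction T)
  case Nil then show ?case by (simp add: letter_op_Nil)
next
  case (Cons x T)
  obtain q b g where x: "x = (q, b, g)" by (cases x) auto
  have "ueq (letter_mul b g X \<odot> C) (letter_mul b g (X \<odot> C))"
  proof (cases b)
    case False
    then have "ucommutes (lt g) C" using Cons.prems x by auto
    then have "ueq (X \<odot> (lt g \<odot> C)) (X \<odot> (C \<odot> lt g))" by (intro ueq_smul_right) (simp add: ucommutes_def)
    then show ?thesis using False by (simp add: letter_mul_def smul_assoc)
  qed (simp add: letter_mul_def smul_assoc)
  moreover have "ueq (letter_op T p z X \<odot> C) (letter_op T p z (X \<odot> C))" using Cons by auto
  ultimately show ?case
    unfolding x letter_op_Cons smul_sadd_left smul_sscal_left by (intro ueq_sadd ueq_sscal)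
qed

lemma solution_smul_right:
  assumes X: "\<forall>w. (\<lambda>t. X t w) holomorphic_on ball 0 r" and z: "z \<in> slit r"
    and X_eq: "ueq (sderiv X z) (letter_op T p z (X z))"
    and C: "\<forall>(q, b, g)\<in>set T. b \<or> ucommutes (lt g) C"
  shows "ueq (sderiv (\<lambda>t. X t \<odot> C) z) (letter_op T p z (X z \<odot> C))"
proof -
  have "sderiv (\<lambda>t. X t \<odot> C) z = sderiv X z \<odot> C"
    by (intro has_sderiv_imp_sderiv has_sderiv_smul_const_right
        holomorphic_has_sderiv[OF X open_ball slit_imp_ball[OF z]])
  also have "ueq \<dots> (letter_op T p z (X z) \<odot> C)" by (rule ueq_smul_left[OF X_eq])
  also have "ueq \<dots> (letter_op T p z (X z \<odot> C))" by (rule letter_op_smul_right[OF C])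
  finally show ?thesis .
qed

lemma ucommutes_solution:
  assumes r: "0 < r" and A: "\<forall>w. (\<lambda>t. A t w) holomorphic_on ball 0 r" and A0: "ueq (A 0) one"
    and A_eq: "\<forall>z\<in>slit r. ueq (sderiv A z) (letter_op T p z (A z))"
    and left: "\<forall>z\<in>slit r. \<forall>(q, b, g)\<in>set T. q p z = 0 \<or> ucommutes (lt h) (lt g)"
    and right: "\<forall>(q, b, g)\<in>set T. b \<or> ucommutes (lt g) (lt h)"
  shows "\<forall>z\<in>slit r. ucommutes (lt h) (A z)"
proof -
  have "\<forall>z\<in>slit r. ueq (lt h \<odot> A z) (A z \<odot> lt h)"
  proof (rule letter_op_solution_unique[OF r, where p = p and T = T])
    show "\<forall>w. (\<lambda>z. (lt h \<odot> A z) w) holomorphic_on ball 0 r" by (rule smul_holomorphic_on[OF _ A]) simp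
    show "\<forall>w. (\<lambda>z. (A z \<odot> lt h) w) holomorphic_on ball 0 r" by (rule smul_holomorphic_on[OF A]) simp
    have "ueq (lt h \<odot> A 0) (lt h \<odot> one)" "ueq (one \<odot> lt h) (A 0 \<odot> lt h)"
      using ueq_smul_right[OF A0] ueq_smul_left[OF ueq_sym[OF A0]] by auto
    then show "ueq (lt h \<odot> A 0) (A 0 \<odot> lt h)" by (metis one_smul smul_one ueq_trans)
    show "\<forall>z\<in>slit r. ueq (sderiv (\<lambda>z. A z \<odot> lt h) z) (letter_op T p z (A z \<odot> lt h))"
      using A_eq right by (blast intro: solution_smul_right[OF A])
    show "\<forall>z\<in>slit r. ueq (sderiv (\<lambda>z. lt h \<odot> A z) z) (letter_op T p z (lt h \<odot> A z))"
    proof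
      fix z assume z: "z \<in> slit r"
      have "sderiv (\<lambda>z. lt h \<odot> A z) z = lt h \<odot> sderiv A z"
        by (intro has_sderiv_imp_sderiv has_sderiv_smul_const_left
            holomorphic_has_sderiv[OF A open_ball slit_imp_ball[OF z]])
      also have "ueq \<dots> (lt h \<odot> letter_op T p z (A z))" using A_eq z by (intro ueq_smul_right) auto
      also have "ueq \<dots> (letter_op T p z (lt h \<odot> A z))"
        using left z by (intro letter_op_ucommutes_left) auto
      finally show "ueq (sderiv (\<lambda>z. lt h \<odot> A z) z) (letter_op T p z (lt h \<odot> A z))" .
    qed
  qed
  then show ?thesis by (simp add: ucommutes_def)
qed


lemma factorization_unique:
  assumes r: "0 < r" and z: "z \<in> slit r"
    and L: "\<forall>t\<in>slit r. has_sderiv L t (sderiv L t) \<and> ueq (sderiv L t) (Om t \<odot> L t)"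
    and Om: "\<forall>t Y. ssub (Om t \<odot> Y) (sscal (1 / t) (Y \<odot> lt g)) = letter_op T p t Y"
    and G: "\<forall>w. (\<lambda>t. G t w) holomorphic_on ball 0 r"
    and A: "\<forall>w. (\<lambda>t. A t w) holomorphic_on ball 0 r"
    and GA0: "ueq (G 0) (A 0)"
    and A_eq: "\<forall>t\<in>slit r. ueq (sderiv A t) (letter_op T p t (A t))"
    and LG: "\<forall>t\<in>slit r. ueq (L t) (G t \<odot> zpow g t \<odot> Q)"
    and LA: "ueq (L z) (A z \<odot> zpow g z \<odot> R)"
    and L_Nil: "L z [] \<noteq> 0"
  shows "ueq (G z \<odot> zpow g z) (A z \<odot> zpow g z) \<and> ueq Q R"
proof -
  have Q0: "Q [] \<noteq> 0" and A_Nil: "A z [] \<noteq> 0"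
    using ueq_Nil[OF LG[rule_format, OF z]] ueq_Nil[OF LA] L_Nil by (auto simp: zpow_Nil)
  have G_slit: "\<forall>w. (\<lambda>t. G t w) holomorphic_on slit r"
    using G holomorphic_on_subset[OF _ slit_subset_ball] by blast
  have "ueq (sderiv G t) (letter_op T p t (G t))" if t: "t \<in> slit r" for t
  proof -
    have "has_sderiv L t (sderiv L t)" "ueq (sderiv L t) (Om t \<odot> L t)" using L t by auto
    from holomorphic_part_equation[OF open_slit t slit_not_nonpos_Reals[OF t] G_slit this LG Q0]
    show ?thesis by (simp only: Om)
  qed
  then have "\<forall>t\<in>slit r. ueq (G t) (A t)"
    using A_eq by (intro letter_op_solution_unique[OF r G A GA0]) auto
  then have GA: "ueq (G z \<odot> zpow g z) (A z \<odot> zpow g z)" using z by (intro ueq_smul_left) auto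
  have "ueq (A z \<odot> zpow g z \<odot> Q) (L z)"
    using ueq_sym[OF ueq_smul_left[OF GA, of Q]] ueq_sym[OF LG[rule_format, OF z]] by (rule ueq_trans)
  then have "ueq ((A z \<odot> zpow g z) \<odot> Q) ((A z \<odot> zpow g z) \<odot> R)" using LA by (rule ueq_trans)
  moreover have "(sexp g (- Ln z) \<odot> sinverse (A z)) \<odot> (A z \<odot> zpow g z)
      = sexp g (- Ln z) \<odot> ((sinverse (A z) \<odot> A z) \<odot> zpow g z)" by (simp add: smul_assoc)
  then have "(sexp g (- Ln z) \<odot> sinverse (A z)) \<odot> (A z \<odot> zpow g z) = one"
    using sinverse_smul[of "A z", OF A_Nil] zpow_inverse(2) by simp
  ultimately have "ueq Q R" by (rule ueq_cancel_left[rotated])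
  with GA show ?thesis ..
qed


section \<open>The formal 2KZ system\<close>

text \<open>Terms of the \<open>z\<^sub>1\<close>- and \<open>z\<^sub>2\<close>-equations for the holomorphic parts, with active variable
  \<open>z\<close> and passive variable \<open>p\<close>; the last term comes from differentiating \<open>z\<^sup>Z\<close>.\<close>

definition terms1 :: term_list where
  "terms1 = [(\<lambda>p z. 1 / z, True, Z1), (\<lambda>p z. 1 / (1 - z), True, Z11),
             (\<lambda>p z. p / (1 - z * p), True, Z12), (\<lambda>p z. - (1 / z), False, Z1)]"

definition terms2 :: term_list where
  "terms2 = [(\<lambda>p z. 1 / z, True, Z2), (\<lambda>p z. 1 / (1 - z), True, Z22),
             (\<lambda>p z. p / (1 - p * z), True, Z12), (\<lambda>p z. - (1 / z), False, Z2)]"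

lemma letter_op_terms1: "ssub (Om1 z1 z2 \<odot> X) (sscal (1 / z1) (X \<odot> lt Z1)) = letter_op terms1 z2 z1 X"
  by (rule ext) (simp add: terms1_def letter_op_def letter_mul_def Om1_def smul_sadd_left
      smul_sscal_left ser_apply algebra_simps)

lemma letter_op_terms2: "ssub (Om2 z1 z2 \<odot> X) (sscal (1 / z2) (X \<odot> lt Z2)) = letter_op terms2 z1 z2 X"
  by (rule ext) (simp add: terms2_def letter_op_def letter_mul_def Om2_def smul_sadd_left
      smul_sscal_left ser_apply algebra_simps)

lemma letter_op_terms1_axis: "ssub (Om1s z \<odot> X) (sscal (1 / z) (X \<odot> lt Z1)) = letter_op terms1 0 z X"
  by (rule ext) (simp add: terms1_def letter_op_def letter_mul_def Om1s_def smul_sadd_left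
      smul_sscal_left ser_apply algebra_simps)

lemma letter_op_terms2_axis: "ssub (Om2s z \<odot> X) (sscal (1 / z) (X \<odot> lt Z2)) = letter_op terms2 0 z X"
  by (rule ext) (simp add: terms2_def letter_op_def letter_mul_def Om2s_def smul_sadd_left
      smul_sscal_left ser_apply algebra_simps)

lemma terms_continuous:
  assumes \<rho>: "0 < \<rho>" "\<rho> \<le> 1" and q: "(q, b, g) \<in> set terms1 \<union> set terms2"
  shows "continuous_on (cball 0 (\<rho>/2) \<times> (ball 0 \<rho> - {0})) (\<lambda>x. q (fst x) (snd x))"
proof -
  have nonzero: "snd x \<noteq> 0" "1 - snd x \<noteq> 0" "1 - fst x * snd x \<noteq> 0" "1 - snd x * fst x \<noteq> 0"
    if "x \<in> cball 0 (\<rho>/2) \<times> (ball 0 \<rho> - {0})" for x :: "complex \<times> complex"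
  proof -
    have "norm (snd x) < 1" "norm (fst x) < 1" using that \<rho> by auto
    moreover from this have "norm (fst x * snd x) < 1"
      by (simp add: norm_mult) (metis mult_strict_mono' norm_ge_zero mult_1_right)
    ultimately show "snd x \<noteq> 0" "1 - snd x \<noteq> 0" "1 - fst x * snd x \<noteq> 0" "1 - snd x * fst x \<noteq> 0"
      using that by (auto simp: mult.commute)
  qed
  from q consider "q = (\<lambda>p z. 1 / z)" | "q = (\<lambda>p z. 1 / (1 - z))" | "q = (\<lambda>p z. p / (1 - z * p))"
    | "q = (\<lambda>p z. p / (1 - p * z))" | "q = (\<lambda>p z. - (1 / z))"
    unfolding terms1_def terms2_def by auto
  then show ?thesis
  proof cases
    case 1 then show ?thesis by (simp only:) (intro continuous_intros; use nonzero in blast)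
  next
    case 2 then show ?thesis by (simp only:) (intro continuous_intros; use nonzero in blast)
  next
    case 3 then show ?thesis by (simp only:) (intro continuous_intros; use nonzero in blast)
  next
    case 4 then show ?thesis by (simp only:) (intro continuous_intros; use nonzero in blast)
  next
    case 5 then show ?thesis by (simp only:) (intro continuous_intros; use nonzero in blast)
  qed
qed

text \<open>The normalized fundamental solutions with an explicit radius, so that all radii can be
  shrunk to a common one.\<close>

definition fsol1_on :: "real \<Rightarrow> gen \<Rightarrow> (complex \<Rightarrow> complex \<Rightarrow> ser) \<Rightarrow> (complex \<Rightarrow> complex \<Rightarrow> ser) \<Rightarrow> bool"
  where "fsol1_on r g A H \<longleftrightarrow> (\<forall>p\<in>ball 0 r.
     (\<forall>w. (\<lambda>z. H z p w) holomorphic_on ball 0 r) \<and>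
     (\<forall>z\<in>ball 0 r. H z p [] = 1) \<and>
     ueq (H 0 p) one \<and>
     (\<forall>z\<in>slit r. ueq (sderiv (\<lambda>t. H t p \<odot> zpow g t) z) (A z p \<odot> (H z p \<odot> zpow g z))))"

definition fsol2KZ_on :: "real \<Rightarrow> (complex \<Rightarrow> complex \<Rightarrow> ser) \<Rightarrow> bool" where
  "fsol2KZ_on r H \<longleftrightarrow>
     (\<forall>w. \<forall>z2\<in>ball 0 r. (\<lambda>z1. H z1 z2 w) holomorphic_on ball 0 r) \<and>
     (\<forall>w. \<forall>z1\<in>ball 0 r. (\<lambda>z2. H z1 z2 w) holomorphic_on ball 0 r) \<and>
     (\<forall>z1\<in>ball 0 r. \<forall>z2\<in>ball 0 r. H z1 z2 [] = 1) \<and>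
     ueq (H 0 0) one \<and>
     (\<forall>z1\<in>slit r. \<forall>z2\<in>slit r.
        ueq (sderiv (\<lambda>t. Lof H t z2) z1) (Om1 z1 z2 \<odot> Lof H z1 z2) \<and>
        ueq (sderiv (\<lambda>t. Lof H z1 t) z2) (Om2 z1 z2 \<odot> Lof H z1 z2))"

lemma fsol1_iff: "fsol1 g A H \<longleftrightarrow> (\<exists>r>0. fsol1_on r g A H)"
  by (simp add: fsol1_def fsol1_on_def)

lemma fsol2KZ_iff: "fsol2KZ H \<longleftrightarrow> (\<exists>r>0. fsol2KZ_on r H)"
  by (simp add: fsol2KZ_def fsol2KZ_on_def)

lemma fsol1_on_mono: "fsol1_on r g A H \<Longrightarrow> \<rho> \<le> r \<Longrightarrow> fsol1_on \<rho> g A H"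
  unfolding fsol1_on_def using slit_mono[of \<rho> r] subset_ball[of \<rho> r 0] holomorphic_on_subset
  by (meson subsetD)

lemma fsol2KZ_on_mono: "fsol2KZ_on r H \<Longrightarrow> \<rho> \<le> r \<Longrightarrow> fsol2KZ_on \<rho> H"
  unfolding fsol2KZ_on_def using slit_mono[of \<rho> r] subset_ball[of \<rho> r 0] holomorphic_on_subset
  by (meson subsetD)

lemma fsol1_on_equation:
  assumes sol: "fsol1_on r g A X" and p: "p \<in> ball 0 r" and z: "z \<in> slit r"
    and A: "\<forall>Y. ssub (A z p \<odot> Y) (sscal (1 / z) (Y \<odot> lt g)) = Lop Y"
  shows "ueq (sderiv (\<lambda>t. X t p) z) (Lop (X z p))"
proof -
  have X: "\<forall>w. (\<lambda>t. X t p w) holomorphic_on ball 0 r"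
    and eq: "ueq (sderiv (\<lambda>t. X t p \<odot> zpow g t) z) (A z p \<odot> (X z p \<odot> zpow g z))"
    using sol p z unfolding fsol1_on_def by blast+
  have zb: "z \<in> ball 0 r" using z by (rule slit_imp_ball)
  have "has_sderiv (\<lambda>t. X t p \<odot> zpow g t) z (sderiv (\<lambda>t. X t p \<odot> zpow g t) z)"
    by (rule has_sderiv_sderiv, rule has_sderiv_smul[OF holomorphic_has_sderiv[OF X open_ball zb]
        zpow_has_sderiv[OF slit_not_nonpos_Reals[OF z]]])
  from holomorphic_part_equation[OF open_ball zb slit_not_nonpos_Reals[OF z] X this eq, where Q = one and g = g]
  show ?thesis by (simp add: A)
qed


locale kz_solutions =
  fixes H :: "complex \<Rightarrow> complex \<Rightarrow> ser"
    and A1 :: "complex \<Rightarrow> complex \<Rightarrow> ser" and A2 :: "complex \<Rightarrow> ser"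
    and B2 :: "complex \<Rightarrow> complex \<Rightarrow> ser" and B1 :: "complex \<Rightarrow> ser"
    and \<rho> :: real
  assumes rho_pos: "0 < \<rho>" and rho_le_1: "\<rho> \<le> 1"
    and H_sol: "fsol2KZ_on \<rho> H"
    and A1_sol: "fsol1_on \<rho> Z1 Om1 A1"
    and A2_sol: "fsol1_on \<rho> Z2 (\<lambda>z2 _. Om2s z2) (\<lambda>z2 _. A2 z2)"
    and B2_sol: "fsol1_on \<rho> Z2 (\<lambda>z2 z1. Om2 z1 z2) (\<lambda>z2 z1. B2 z1 z2)"
    and B1_sol: "fsol1_on \<rho> Z1 (\<lambda>z1 _. Om1s z1) (\<lambda>z1 _. B1 z1)"
begin

lemma zero_in_ball: "0 \<in> ball (0::complex) \<rho>"
  using rho_pos by simp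

lemma H_holo1: "z2 \<in> ball 0 \<rho> \<Longrightarrow> \<forall>w. (\<lambda>z1. H z1 z2 w) holomorphic_on ball 0 \<rho>"
  and H_holo2: "z1 \<in> ball 0 \<rho> \<Longrightarrow> \<forall>w. (\<lambda>z2. H z1 z2 w) holomorphic_on ball 0 \<rho>"
  and H_Nil: "z1 \<in> ball 0 \<rho> \<Longrightarrow> z2 \<in> ball 0 \<rho> \<Longrightarrow> H z1 z2 [] = 1"
  and H_00: "ueq (H 0 0) one"
  and L_eq1: "z1 \<in> slit \<rho> \<Longrightarrow> z2 \<in> slit \<rho> \<Longrightarrow>
      ueq (sderiv (\<lambda>t. Lof H t z2) z1) (Om1 z1 z2 \<odot> Lof H z1 z2)"
  and L_eq2: "z1 \<in> slit \<rho> \<Longrightarrow> z2 \<in> slit \<rho> \<Longrightarrow>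
      ueq (sderiv (\<lambda>t. Lof H z1 t) z2) (Om2 z1 z2 \<odot> Lof H z1 z2)"
  using H_sol unfolding fsol2KZ_on_def by blast+

lemma A1_holo: "p \<in> ball 0 \<rho> \<Longrightarrow> \<forall>w. (\<lambda>z. A1 z p w) holomorphic_on ball 0 \<rho>"
  and A1_0: "p \<in> ball 0 \<rho> \<Longrightarrow> ueq (A1 0 p) one"
  using A1_sol unfolding fsol1_on_def by blast+

lemma B2_holo: "p \<in> ball 0 \<rho> \<Longrightarrow> \<forall>w. (\<lambda>z. B2 p z w) holomorphic_on ball 0 \<rho>"
  and B2_0: "p \<in> ball 0 \<rho> \<Longrightarrow> ueq (B2 p 0) one"
  using B2_sol unfolding fsol1_on_def by blast+

lemma A2_holo: "\<forall>w. (\<lambda>z. A2 z w) holomorphic_on ball 0 \<rho>"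
  and A2_Nil: "z \<in> ball 0 \<rho> \<Longrightarrow> A2 z [] = 1"
  and A2_0: "ueq (A2 0) one"
  using A2_sol zero_in_ball unfolding fsol1_on_def by blast+

lemma B1_holo: "\<forall>w. (\<lambda>z. B1 z w) holomorphic_on ball 0 \<rho>"
  and B1_Nil: "z \<in> ball 0 \<rho> \<Longrightarrow> B1 z [] = 1"
  and B1_0: "ueq (B1 0) one"
  using B1_sol zero_in_ball unfolding fsol1_on_def by blast+

lemma A1_eq: "p \<in> ball 0 \<rho> \<Longrightarrow> z \<in> slit \<rho> \<Longrightarrow>
    ueq (sderiv (\<lambda>t. A1 t p) z) (letter_op terms1 p z (A1 z p))"
  by (rule fsol1_on_equation[OF A1_sol]) (simp_all add: letter_op_terms1)

lemma B2_eq: "p \<in> ball 0 \<rho> \<Longrightarrow> z \<in> slit \<rho> \<Longrightarrow>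
    ueq (sderiv (B2 p) z) (letter_op terms2 p z (B2 p z))"
  using fsol1_on_equation[OF B2_sol, of p z] by (simp add: letter_op_terms2 eta_contract_eq)

lemma A2_eq: "z \<in> slit \<rho> \<Longrightarrow> ueq (sderiv A2 z) (letter_op terms2 0 z (A2 z))"
  using fsol1_on_equation[OF A2_sol zero_in_ball, of z] by (simp add: letter_op_terms2_axis)

lemma B1_eq: "z \<in> slit \<rho> \<Longrightarrow> ueq (sderiv B1 z) (letter_op terms1 0 z (B1 z))"
  using fsol1_on_equation[OF B1_sol zero_in_ball, of z] by (simp add: letter_op_terms1_axis)

lemma H_eq1:
  assumes z1: "z1 \<in> slit \<rho>" and z2: "z2 \<in> slit \<rho>"
  shows "ueq (sderiv (\<lambda>t. H t z2) z1) (letter_op terms1 z2 z1 (H z1 z2))"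
proof -
  have H: "\<forall>w. (\<lambda>t. H t z2 w) holomorphic_on slit \<rho>"
    using H_holo1[OF slit_imp_ball[OF z2]] holomorphic_on_subset[OF _ slit_subset_ball] by blast
  have "has_sderiv (\<lambda>t. Lof H t z2) z1 (sderiv (\<lambda>t. Lof H t z2) z1)"
    unfolding Lof_def
    by (rule has_sderiv_sderiv, rule has_sderiv_smul_const_right, rule has_sderiv_smul[OF
        holomorphic_has_sderiv[OF H open_slit z1] zpow_has_sderiv[OF slit_not_nonpos_Reals[OF z1]]])
  from holomorphic_part_equation[OF open_slit z1 slit_not_nonpos_Reals[OF z1] H this L_eq1[OF z1 z2],
      where Q = "zpow Z2 z2" and g = Z1]
  show ?thesis by (simp add: Lof_def zpow_Nil letter_op_terms1)
qed

lemma Z2_ucommutes_zpow_Z1: "ucommutes (lt Z2) (zpow Z1 z)"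
  by (rule ucommutes_zpow[OF ucommutes_sym[OF ucommutes_Z1_Z2]])

text \<open>For the \<open>z\<^sub>2\<close>-equation the factor \<open>z\<^sub>1\<^sup>Z\<^sup>1\<close> sits between \<open>H\<close> and \<open>z\<^sub>2\<^sup>Z\<^sup>2\<close>; it is moved to
  the right using \<open>[Z\<^sub>1, Z\<^sub>2] = 0\<close>.\<close>

lemma H_eq2:
  assumes z1: "z1 \<in> slit \<rho>" and z2: "z2 \<in> slit \<rho>"
  shows "ueq (sderiv (H z1) z2) (letter_op terms2 z1 z2 (H z1 z2))"
proof -
  define P where "P = zpow Z1 z1"
  have H: "\<forall>w. (\<lambda>t. H z1 t w) holomorphic_on slit \<rho>"
    using H_holo2[OF slit_imp_ball[OF z1]] holomorphic_on_subset[OF _ slit_subset_ball] by blast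
  then have HP: "\<forall>w. (\<lambda>t. (H z1 t \<odot> P) w) holomorphic_on slit \<rho>"
    by (intro smul_holomorphic_on) simp_all
  have HP': "has_sderiv (\<lambda>t. H z1 t \<odot> P) z2 (sderiv (H z1) z2 \<odot> P)"
    using has_sderiv_smul_const_right[OF holomorphic_has_sderiv[OF H open_slit z2]]
    by (simp add: eta_contract_eq)
  have "has_sderiv (\<lambda>t. Lof H z1 t) z2 (sderiv (\<lambda>t. Lof H z1 t) z2)"
    unfolding Lof_def P_def[symmetric]
    by (rule has_sderiv_sderiv, rule has_sderiv_smul[OF HP' zpow_has_sderiv[OF slit_not_nonpos_Reals[OF z2]]])
  from holomorphic_part_equation[OF open_slit z2 slit_not_nonpos_Reals[OF z2] HP this L_eq2[OF z1 z2],
      where Q = one and g = Z2]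
  have "ueq (sderiv (H z1) z2 \<odot> P)
      (ssub (Om2 z1 z2 \<odot> (H z1 z2 \<odot> P)) (sscal (1 / z2) ((H z1 z2 \<odot> P) \<odot> lt Z2)))"
    using has_sderiv_imp_sderiv[OF HP'] by (simp add: Lof_def P_def)
  also have "ueq \<dots> (ssub (Om2 z1 z2 \<odot> H z1 z2) (sscal (1 / z2) (H z1 z2 \<odot> lt Z2)) \<odot> P)"
  proof -
    have "ueq (H z1 z2 \<odot> (P \<odot> lt Z2)) (H z1 z2 \<odot> (lt Z2 \<odot> P))"
      using Z2_ucommutes_zpow_Z1 by (intro ueq_smul_right) (simp add: ucommutes_def P_def ueq_sym)
    then show ?thesis
      by (simp add: smul_ssub_left smul_sscal_left smul_assoc ueq_ssub ueq_sscal)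
  qed
  finally show ?thesis
    unfolding P_def letter_op_terms2[symmetric] by (rule ueq_cancel_right[OF zpow_inverse(1)])
qed

lemma Z1_ucommutes_A2: "z \<in> slit \<rho> \<Longrightarrow> ucommutes (lt Z1) (A2 z)"
  using ucommutes_solution[OF rho_pos A2_holo A2_0, where T = terms2 and p = 0 and h = Z1] A2_eq
  by (auto simp: terms2_def ucommutes_Z1_Z2 ucommutes_Z1_Z22 ucommutes_sym)

lemma Z2_ucommutes_B1: "z \<in> slit \<rho> \<Longrightarrow> ucommutes (lt Z2) (B1 z)"
  using ucommutes_solution[OF rho_pos B1_holo B1_0, where T = terms1 and p = 0 and h = Z2] B1_eq
  by (auto simp: terms1_def ucommutes_Z1_Z2 ucommutes_Z11_Z2 ucommutes_sym)

lemma restriction_to_z1_0: "z \<in> slit \<rho> \<Longrightarrow> ueq (H 0 z) (A2 z)"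
proof -
  interpret axis_restriction \<rho> H terms2 A2
    using rho_pos H_holo1 H_holo2 H_Nil H_eq2 terms_continuous[OF rho_pos rho_le_1] A2_holo A2_Nil
      ueq_trans[OF A2_0 ueq_sym[OF H_00]] A2_eq
    by unfold_locales blast+
  show "z \<in> slit \<rho> \<Longrightarrow> ueq (H 0 z) (A2 z)" by (rule restriction_eq_solution)
qed

lemma restriction_to_z2_0: "z \<in> slit \<rho> \<Longrightarrow> ueq (H z 0) (B1 z)"
proof -
  interpret axis_restriction \<rho> "\<lambda>z2 z1. H z1 z2" terms1 B1
    using rho_pos H_holo1 H_holo2 H_Nil H_eq1 terms_continuous[OF rho_pos rho_le_1] B1_holo B1_Nil
      ueq_trans[OF B1_0 ueq_sym[OF H_00]] B1_eq
    by unfold_locales (blast | simp)+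
  show "z \<in> slit \<rho> \<Longrightarrow> ueq (H z 0) (B1 z)" using restriction_eq_solution by simp
qed

lemma H_eq_A1_A2:
  assumes z1: "z1 \<in> slit \<rho>" and z2: "z2 \<in> slit \<rho>"
  shows "ueq (H z1 z2) (A1 z1 z2 \<odot> A2 z2)"
proof -
  note z2b = slit_imp_ball[OF z2]
  have "\<forall>z\<in>slit \<rho>. ueq (H z z2) (A1 z z2 \<odot> A2 z2)"
  proof (rule letter_op_solution_unique[OF rho_pos H_holo1[OF z2b], where p = z2 and T = terms1])
    show "\<forall>w. (\<lambda>z. (A1 z z2 \<odot> A2 z2) w) holomorphic_on ball 0 \<rho>"
      by (rule smul_holomorphic_on[OF A1_holo[OF z2b]]) simp
    show "ueq (H 0 z2) (A1 0 z2 \<odot> A2 z2)"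
      using restriction_to_z1_0[OF z2] ueq_sym[OF ueq_smul_left[OF A1_0[OF z2b], of "A2 z2"]]
      by (simp add: ueq_trans)
    show "\<forall>z\<in>slit \<rho>. ueq (sderiv (\<lambda>z. H z z2) z) (letter_op terms1 z2 z (H z z2))"
      using H_eq1 z2 by blast
    show "\<forall>z\<in>slit \<rho>. ueq (sderiv (\<lambda>z. A1 z z2 \<odot> A2 z2) z) (letter_op terms1 z2 z (A1 z z2 \<odot> A2 z2))"
      using A1_eq[OF z2b] Z1_ucommutes_A2[OF z2]
      by (auto intro!: solution_smul_right[OF A1_holo[OF z2b]] simp: terms1_def ucommutes_sym)
  qed
  then show ?thesis using z1 by blast
qed

lemma H_eq_B2_B1:
  assumes z1: "z1 \<in> slit \<rho>" and z2: "z2 \<in> slit \<rho>"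
  shows "ueq (H z1 z2) (B2 z1 z2 \<odot> B1 z1)"
proof -
  note z1b = slit_imp_ball[OF z1]
  have "\<forall>z\<in>slit \<rho>. ueq (H z1 z) (B2 z1 z \<odot> B1 z1)"
  proof (rule letter_op_solution_unique[OF rho_pos H_holo2[OF z1b], where p = z1 and T = terms2])
    show "\<forall>w. (\<lambda>z. (B2 z1 z \<odot> B1 z1) w) holomorphic_on ball 0 \<rho>"
      by (rule smul_holomorphic_on[OF B2_holo[OF z1b]]) simp
    show "ueq (H z1 0) (B2 z1 0 \<odot> B1 z1)"
      using restriction_to_z2_0[OF z1] ueq_sym[OF ueq_smul_left[OF B2_0[OF z1b], of "B1 z1"]]
      by (simp add: ueq_trans)
    show "\<forall>z\<in>slit \<rho>. ueq (sderiv (\<lambda>z. H z1 z) z) (letter_op terms2 z1 z (H z1 z))"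
      using H_eq2 z1 by (simp add: eta_contract_eq)
    show "\<forall>z\<in>slit \<rho>. ueq (sderiv (\<lambda>z. B2 z1 z \<odot> B1 z1) z) (letter_op terms2 z1 z (B2 z1 z \<odot> B1 z1))"
      using B2_eq[OF z1b] Z2_ucommutes_B1[OF z1]
      by (auto intro!: solution_smul_right[OF B2_holo[OF z1b]] simp: terms2_def ucommutes_sym eta_contract_eq)
  qed
  then show ?thesis using z2 by blast
qed

lemma factorizations:
  assumes z1: "z1 \<in> slit \<rho>" and z2: "z2 \<in> slit \<rho>"
  shows "ueq (Lof H z1 z2) (A1 z1 z2 \<odot> A2 z2 \<odot> zpow Z1 z1 \<odot> zpow Z2 z2) \<and>
       ueq (Lof H z1 z2) ((A1 z1 z2 \<odot> zpow Z1 z1) \<odot> (A2 z2 \<odot> zpow Z2 z2)) \<and>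
       ueq (Lof H z1 z2) (B2 z1 z2 \<odot> B1 z1 \<odot> zpow Z1 z1 \<odot> zpow Z2 z2) \<and>
       ueq (Lof H z1 z2) ((B2 z1 z2 \<odot> zpow Z2 z2) \<odot> (B1 z1 \<odot> zpow Z1 z1))"
proof -
  define P1 where "P1 = zpow Z1 z1"
  define P2 where "P2 = zpow Z2 z2"
  have A: "ueq (Lof H z1 z2) (A1 z1 z2 \<odot> A2 z2 \<odot> P1 \<odot> P2)"
    unfolding Lof_def P1_def P2_def by (intro ueq_smul_left H_eq_A1_A2[OF z1 z2])
  have B: "ueq (Lof H z1 z2) (B2 z1 z2 \<odot> B1 z1 \<odot> P1 \<odot> P2)"
    unfolding Lof_def P1_def P2_def by (intro ueq_smul_left H_eq_B2_B1[OF z1 z2])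
  have "ueq (A2 z2 \<odot> P1) (P1 \<odot> A2 z2)"
    using ucommutes_zpow[OF ucommutes_sym[OF Z1_ucommutes_A2[OF z2]]] by (simp add: ucommutes_def P1_def)
  then have "ueq (A1 z1 z2 \<odot> (A2 z2 \<odot> P1) \<odot> P2) (A1 z1 z2 \<odot> (P1 \<odot> A2 z2) \<odot> P2)"
    by (intro ueq_smul_left ueq_smul_right)
  then have "ueq (A1 z1 z2 \<odot> A2 z2 \<odot> P1 \<odot> P2) ((A1 z1 z2 \<odot> P1) \<odot> (A2 z2 \<odot> P2))"
    by (simp add: smul_assoc)
  moreover have "ueq (B2 z1 z2 \<odot> B1 z1 \<odot> P1 \<odot> P2) ((B2 z1 z2 \<odot> P2) \<odot> (B1 z1 \<odot> P1))"
  proof -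
    have "ueq (P1 \<odot> P2) (P2 \<odot> P1)"
      using ucommutes_zpow[OF ucommutes_sym[OF Z2_ucommutes_zpow_Z1[of z1]]]
      by (simp add: ucommutes_def P1_def P2_def)
    then have "ueq (B2 z1 z2 \<odot> B1 z1 \<odot> (P1 \<odot> P2)) (B2 z1 z2 \<odot> B1 z1 \<odot> (P2 \<odot> P1))"
      by (rule ueq_smul_right)
    moreover have "ueq (B1 z1 \<odot> P2) (P2 \<odot> B1 z1)"
      using ucommutes_zpow[OF ucommutes_sym[OF Z2_ucommutes_B1[OF z1]]] by (simp add: ucommutes_def P2_def)
    then have "ueq (B2 z1 z2 \<odot> (B1 z1 \<odot> P2) \<odot> P1) (B2 z1 z2 \<odot> (P2 \<odot> B1 z1) \<odot> P1)"
      by (intro ueq_smul_left ueq_smul_right)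
    ultimately show ?thesis by (simp add: smul_assoc) (rule ueq_trans)
  qed
  ultimately show ?thesis using A B unfolding P1_def P2_def by (blast intro: ueq_trans)
qed

lemma Lof_Nil: "z1 \<in> ball 0 \<rho> \<Longrightarrow> z2 \<in> ball 0 \<rho> \<Longrightarrow> Lof H z1 z2 [] = 1"
  by (simp add: Lof_def zpow_Nil H_Nil)

lemma Lof_has_sderiv1: "z1 \<in> slit \<rho> \<Longrightarrow> z2 \<in> ball 0 \<rho> \<Longrightarrow>
    has_sderiv (\<lambda>t. Lof H t z2) z1 (sderiv (\<lambda>t. Lof H t z2) z1)"
  unfolding Lof_def
  by (rule has_sderiv_sderiv, rule has_sderiv_smul_const_right, rule has_sderiv_smul[OF
      holomorphic_has_sderiv[OF H_holo1 open_ball slit_imp_ball] zpow_has_sderiv[OF slit_not_nonpos_Reals]])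

lemma Lof_has_sderiv2: "z1 \<in> ball 0 \<rho> \<Longrightarrow> z2 \<in> slit \<rho> \<Longrightarrow>
    has_sderiv (\<lambda>t. Lof H z1 t) z2 (sderiv (\<lambda>t. Lof H z1 t) z2)"
  unfolding Lof_def
  by (rule has_sderiv_sderiv, rule has_sderiv_smul[OF has_sderiv_smul_const_right[OF
      holomorphic_has_sderiv[OF H_holo2 open_ball slit_imp_ball]] zpow_has_sderiv[OF slit_not_nonpos_Reals]])

text \<open>In part (ii) only the normalized holomorphic first factor enters: the second factor is
  recovered by cancellation.\<close>

lemma factorization_12_unique:
  assumes G1: "\<exists>r>0. (\<forall>w. \<forall>z2\<in>ball 0 r. (\<lambda>z1. G1 z1 z2 w) holomorphic_on ball 0 r) \<and>
                     (\<forall>z2\<in>ball 0 r. ueq (G1 0 z2) one)"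
    and LG: "\<exists>r>0. \<forall>z1\<in>slit r. \<forall>z2\<in>slit r.
              ueq (Lof H z1 z2) ((G1 z1 z2 \<odot> zpow Z1 z1) \<odot> (G2 z2 \<odot> zpow Z2 z2))"
  shows "\<exists>r>0. \<forall>z1\<in>slit r. \<forall>z2\<in>slit r.
              ueq (G1 z1 z2 \<odot> zpow Z1 z1) (A1 z1 z2 \<odot> zpow Z1 z1) \<and>
              ueq (G2 z2 \<odot> zpow Z2 z2) (A2 z2 \<odot> zpow Z2 z2)"
proof -
  obtain r1 where r1: "r1 > 0" "\<forall>w. \<forall>z2\<in>ball 0 r1. (\<lambda>z1. G1 z1 z2 w) holomorphic_on ball 0 r1"
      "\<forall>z2\<in>ball 0 r1. ueq (G1 0 z2) one" using G1 by blast
  obtain r2 where r2: "r2 > 0" "\<forall>z1\<in>slit r2. \<forall>z2\<in>slit r2.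
      ueq (Lof H z1 z2) ((G1 z1 z2 \<odot> zpow Z1 z1) \<odot> (G2 z2 \<odot> zpow Z2 z2))" using LG by blast
  define \<sigma> where "\<sigma> = min \<rho> (min r1 r2)"
  have \<sigma>: "0 < \<sigma>" "\<sigma> \<le> \<rho>" "\<sigma> \<le> r1" "\<sigma> \<le> r2" using rho_pos r1 r2 by (auto simp: \<sigma>_def)
  have "ueq (G1 z1 z2 \<odot> zpow Z1 z1) (A1 z1 z2 \<odot> zpow Z1 z1) \<and>
        ueq (G2 z2 \<odot> zpow Z2 z2) (A2 z2 \<odot> zpow Z2 z2)"
    if z1: "z1 \<in> slit \<sigma>" and z2: "z2 \<in> slit \<sigma>" for z1 z2
  proof (rule factorization_unique[OF \<sigma>(1) z1, where Om = "\<lambda>t. Om1 t z2" and T = terms1 and p = z2])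
    have slit: "slit \<sigma> \<subseteq> slit \<rho>" "slit \<sigma> \<subseteq> slit r2" using slit_mono \<sigma> by auto
    have ball: "ball 0 \<sigma> \<subseteq> ball 0 \<rho>" "ball 0 \<sigma> \<subseteq> ball 0 r1" using \<sigma> by auto
    have z2b: "z2 \<in> ball 0 \<sigma>" using z2 by (rule slit_imp_ball)
    show "\<forall>t\<in>slit \<sigma>. has_sderiv (\<lambda>t. Lof H t z2) t (sderiv (\<lambda>t. Lof H t z2) t) \<and>
        ueq (sderiv (\<lambda>t. Lof H t z2) t) (Om1 t z2 \<odot> Lof H t z2)"
      using Lof_has_sderiv1 L_eq1 slit z2b ball z2 by blast
    show "\<forall>t Y. ssub (Om1 t z2 \<odot> Y) (sscal (1 / t) (Y \<odot> lt Z1)) = letter_op terms1 z2 t Y"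
      by (simp add: letter_op_terms1)
    show "\<forall>w. (\<lambda>t. G1 t z2 w) holomorphic_on ball 0 \<sigma>"
      using r1(2) ball z2b holomorphic_on_subset by blast
    show "\<forall>w. (\<lambda>t. A1 t z2 w) holomorphic_on ball 0 \<sigma>"
      using A1_holo ball z2b holomorphic_on_subset by blast
    show "ueq (G1 0 z2) (A1 0 z2)"
      using r1(3) A1_0 ball z2b by (meson subsetD ueq_sym ueq_trans)
    show "\<forall>t\<in>slit \<sigma>. ueq (sderiv (\<lambda>t. A1 t z2) t) (letter_op terms1 z2 t (A1 t z2))"
      using A1_eq ball slit z2b by blast
    show "\<forall>t\<in>slit \<sigma>. ueq (Lof H t z2) (G1 t z2 \<odot> zpow Z1 t \<odot> (G2 z2 \<odot> zpow Z2 z2))"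
      using r2(2) slit z2 by blast
    show "ueq (Lof H z1 z2) (A1 z1 z2 \<odot> zpow Z1 z1 \<odot> (A2 z2 \<odot> zpow Z2 z2))"
      using factorizations slit z1 z2 by blast
    show "Lof H z1 z2 [] \<noteq> 0"
      using Lof_Nil slit z1 z2 slit_imp_ball by (metis subsetD zero_neq_one)
  qed
  then show ?thesis using \<sigma>(1) by blast
qed

lemma factorization_21_unique:
  assumes G2: "\<exists>r>0. (\<forall>w. \<forall>z1\<in>ball 0 r. (\<lambda>z2. G2 z1 z2 w) holomorphic_on ball 0 r) \<and>
                     (\<forall>z1\<in>ball 0 r. ueq (G2 z1 0) one)"
    and LG: "\<exists>r>0. \<forall>z1\<in>slit r. \<forall>z2\<in>slit r.
              ueq (Lof H z1 z2) ((G2 z1 z2 \<odot> zpow Z2 z2) \<odot> (G1 z1 \<odot> zpow Z1 z1))"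
  shows "\<exists>r>0. \<forall>z1\<in>slit r. \<forall>z2\<in>slit r.
              ueq (G2 z1 z2 \<odot> zpow Z2 z2) (B2 z1 z2 \<odot> zpow Z2 z2) \<and>
              ueq (G1 z1 \<odot> zpow Z1 z1) (B1 z1 \<odot> zpow Z1 z1)"
proof -
  obtain r1 where r1: "r1 > 0" "\<forall>w. \<forall>z1\<in>ball 0 r1. (\<lambda>z2. G2 z1 z2 w) holomorphic_on ball 0 r1"
      "\<forall>z1\<in>ball 0 r1. ueq (G2 z1 0) one" using G2 by blast
  obtain r2 where r2: "r2 > 0" "\<forall>z1\<in>slit r2. \<forall>z2\<in>slit r2.
      ueq (Lof H z1 z2) ((G2 z1 z2 \<odot> zpow Z2 z2) \<odot> (G1 z1 \<odot> zpow Z1 z1))" using LG by blast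
  define \<sigma> where "\<sigma> = min \<rho> (min r1 r2)"
  have \<sigma>: "0 < \<sigma>" "\<sigma> \<le> \<rho>" "\<sigma> \<le> r1" "\<sigma> \<le> r2" using rho_pos r1 r2 by (auto simp: \<sigma>_def)
  have "ueq (G2 z1 z2 \<odot> zpow Z2 z2) (B2 z1 z2 \<odot> zpow Z2 z2) \<and>
        ueq (G1 z1 \<odot> zpow Z1 z1) (B1 z1 \<odot> zpow Z1 z1)"
    if z1: "z1 \<in> slit \<sigma>" and z2: "z2 \<in> slit \<sigma>" for z1 z2
  proof (rule factorization_unique[OF \<sigma>(1) z2, where Om = "Om2 z1" and T = terms2 and p = z1])
    have slit: "slit \<sigma> \<subseteq> slit \<rho>" "slit \<sigma> \<subseteq> slit r2" using slit_mono \<sigma> by auto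
    have ball: "ball 0 \<sigma> \<subseteq> ball 0 \<rho>" "ball 0 \<sigma> \<subseteq> ball 0 r1" using \<sigma> by auto
    have z1b: "z1 \<in> ball 0 \<sigma>" using z1 by (rule slit_imp_ball)
    show "\<forall>t\<in>slit \<sigma>. has_sderiv (Lof H z1) t (sderiv (Lof H z1) t) \<and>
        ueq (sderiv (Lof H z1) t) (Om2 z1 t \<odot> Lof H z1 t)"
    proof
      fix t assume "t \<in> slit \<sigma>"
      then have t: "t \<in> slit \<rho>" using slit by blast
      have "z1 \<in> slit \<rho>" using z1 slit by blast
      then show "has_sderiv (Lof H z1) t (sderiv (Lof H z1) t) \<and>
          ueq (sderiv (Lof H z1) t) (Om2 z1 t \<odot> Lof H z1 t)"
        using Lof_has_sderiv2[OF slit_imp_ball t] L_eq2[OF _ t] by (simp add: eta_contract_eq)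
    qed
    show "\<forall>t Y. ssub (Om2 z1 t \<odot> Y) (sscal (1 / t) (Y \<odot> lt Z2)) = letter_op terms2 z1 t Y"
      by (simp add: letter_op_terms2)
    show "\<forall>w. (\<lambda>t. G2 z1 t w) holomorphic_on ball 0 \<sigma>"
      using r1(2) ball z1b holomorphic_on_subset by blast
    show "\<forall>w. (\<lambda>t. B2 z1 t w) holomorphic_on ball 0 \<sigma>"
      using B2_holo ball z1b holomorphic_on_subset by blast
    show "ueq (G2 z1 0) (B2 z1 0)"
      using r1(3) B2_0 ball z1b by (meson subsetD ueq_sym ueq_trans)
    show "\<forall>t\<in>slit \<sigma>. ueq (sderiv (B2 z1) t) (letter_op terms2 z1 t (B2 z1 t))"
      using B2_eq ball slit z1b by blast
    show "\<forall>t\<in>slit \<sigma>. ueq (Lof H z1 t) (G2 z1 t \<odot> zpow Z2 t \<odot> (G1 z1 \<odot> zpow Z1 z1))"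
      using r2(2) slit z1 by blast
    show "ueq (Lof H z1 z2) (B2 z1 z2 \<odot> zpow Z2 z2 \<odot> (B1 z1 \<odot> zpow Z1 z1))"
      using factorizations slit z1 z2 by blast
    show "Lof H z1 z2 [] \<noteq> 0"
      using Lof_Nil slit z1 z2 slit_imp_ball by (metis subsetD zero_neq_one)
  qed
  then show ?thesis using \<sigma>(1) by blast
qed

end

lemma kz_solutions_exist:
  assumes "fsol2KZ H" "fsol1 Z1 Om1 A1" "fsol1 Z2 (\<lambda>z2 _. Om2s z2) (\<lambda>z2 _. A2 z2)"
    "fsol1 Z2 (\<lambda>z2 z1. Om2 z1 z2) (\<lambda>z2 z1. B2 z1 z2)" "fsol1 Z1 (\<lambda>z1 _. Om1s z1) (\<lambda>z1 _. B1 z1)"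
  shows "\<exists>\<rho>. kz_solutions H A1 A2 B2 B1 \<rho>"
proof -
  obtain rL rA1 rA2 rB2 rB1 where r: "rL > 0" "rA1 > 0" "rA2 > 0" "rB2 > 0" "rB1 > 0"
    and sol: "fsol2KZ_on rL H" "fsol1_on rA1 Z1 Om1 A1" "fsol1_on rA2 Z2 (\<lambda>z2 _. Om2s z2) (\<lambda>z2 _. A2 z2)"
      "fsol1_on rB2 Z2 (\<lambda>z2 z1. Om2 z1 z2) (\<lambda>z2 z1. B2 z1 z2)" "fsol1_on rB1 Z1 (\<lambda>z1 _. Om1s z1) (\<lambda>z1 _. B1 z1)"
    using assms unfolding fsol2KZ_iff fsol1_iff by blast
  define \<rho> where "\<rho> = min 1 (min rL (min rA1 (min rA2 (min rB2 rB1))))"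
  have "kz_solutions H A1 A2 B2 B1 \<rho>"
    using r by unfold_locales
      (auto simp: \<rho>_def intro: fsol2KZ_on_mono[OF sol(1)] fsol1_on_mono[OF sol(2)]
        fsol1_on_mono[OF sol(3)] fsol1_on_mono[OF sol(4)] fsol1_on_mono[OF sol(5)])
  then show ?thesis ..
qed

theorem proposition6p3:
  fixes H :: "complex \<Rightarrow> complex \<Rightarrow> ser"
    and A1 :: "complex \<Rightarrow> complex \<Rightarrow> ser" and A2 :: "complex \<Rightarrow> ser"
    and B2 :: "complex \<Rightarrow> complex \<Rightarrow> ser" and B1 :: "complex \<Rightarrow> ser"
  assumes hL: "fsol2KZ H"
    and hA1: "fsol1 Z1 Om1 A1"
    and hA2: "fsol1 Z2 (\<lambda>z2 _. Om2s z2) (\<lambda>z2 _. A2 z2)"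
    and hB2: "fsol1 Z2 (\<lambda>z2 z1. Om2 z1 z2) (\<lambda>z2 z1. B2 z1 z2)"
    and hB1: "fsol1 Z1 (\<lambda>z1 _. Om1s z1) (\<lambda>z1 _. B1 z1)"
  shows
   "(\<exists>r>0. \<forall>z1\<in>slit r. \<forall>z2\<in>slit r.
       ueq (Lof H z1 z2) (A1 z1 z2 \<odot> A2 z2 \<odot> zpow Z1 z1 \<odot> zpow Z2 z2) \<and>
       ueq (Lof H z1 z2) ((A1 z1 z2 \<odot> zpow Z1 z1) \<odot> (A2 z2 \<odot> zpow Z2 z2)) \<and>
       ueq (Lof H z1 z2) (B2 z1 z2 \<odot> B1 z1 \<odot> zpow Z1 z1 \<odot> zpow Z2 z2) \<and>
       ueq (Lof H z1 z2) ((B2 z1 z2 \<odot> zpow Z2 z2) \<odot> (B1 z1 \<odot> zpow Z1 z1)))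
    \<and>
    (\<forall>(G1 :: complex \<Rightarrow> complex \<Rightarrow> ser) (G2 :: complex \<Rightarrow> ser).
       (\<exists>r>0. (\<forall>w. \<forall>z2\<in>ball 0 r. (\<lambda>z1. G1 z1 z2 w) holomorphic_on ball 0 r) \<and>
              (\<forall>w. \<forall>z1\<in>ball 0 r. (\<lambda>z2. G1 z1 z2 w) holomorphic_on ball 0 r) \<and>
              (\<forall>z2\<in>ball 0 r. ueq (G1 0 z2) one) \<and>
              (\<forall>z1\<in>slit r. \<forall>z2\<in>ball 0 r. in_sub {Z1, Z11, Z12} (G1 z1 z2 \<odot> zpow Z1 z1))) \<and>
       (\<exists>r>0. (\<forall>w. (\<lambda>z2. G2 z2 w) holomorphic_on ball 0 r) \<and>
              ueq (G2 0) one \<and>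
              (\<forall>z2\<in>slit r. in_sub {Z2, Z22} (G2 z2 \<odot> zpow Z2 z2))) \<and>
       (\<exists>r>0. \<forall>z1\<in>slit r. \<forall>z2\<in>slit r.
              ueq (Lof H z1 z2) ((G1 z1 z2 \<odot> zpow Z1 z1) \<odot> (G2 z2 \<odot> zpow Z2 z2)))
       \<longrightarrow> (\<exists>r>0. \<forall>z1\<in>slit r. \<forall>z2\<in>slit r.
              ueq (G1 z1 z2 \<odot> zpow Z1 z1) (A1 z1 z2 \<odot> zpow Z1 z1) \<and>
              ueq (G2 z2 \<odot> zpow Z2 z2) (A2 z2 \<odot> zpow Z2 z2)))
    \<and>
    (\<forall>(G2 :: complex \<Rightarrow> complex \<Rightarrow> ser) (G1 :: complex \<Rightarrow> ser).
       (\<exists>r>0. (\<forall>w. \<forall>z1\<in>ball 0 r. (\<lambda>z2. G2 z1 z2 w) holomorphic_on ball 0 r) \<and>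
              (\<forall>w. \<forall>z2\<in>ball 0 r. (\<lambda>z1. G2 z1 z2 w) holomorphic_on ball 0 r) \<and>
              (\<forall>z1\<in>ball 0 r. ueq (G2 z1 0) one) \<and>
              (\<forall>z1\<in>ball 0 r. \<forall>z2\<in>slit r. in_sub {Z2, Z22, Z12} (G2 z1 z2 \<odot> zpow Z2 z2))) \<and>
       (\<exists>r>0. (\<forall>w. (\<lambda>z1. G1 z1 w) holomorphic_on ball 0 r) \<and>
              ueq (G1 0) one \<and>
              (\<forall>z1\<in>slit r. in_sub {Z1, Z11} (G1 z1 \<odot> zpow Z1 z1))) \<and>
       (\<exists>r>0. \<forall>z1\<in>slit r. \<forall>z2\<in>slit r.
              ueq (Lof H z1 z2) ((G2 z1 z2 \<odot> zpow Z2 z2) \<odot> (G1 z1 \<odot> zpow Z1 z1)))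
       \<longrightarrow> (\<exists>r>0. \<forall>z1\<in>slit r. \<forall>z2\<in>slit r.
              ueq (G2 z1 z2 \<odot> zpow Z2 z2) (B2 z1 z2 \<odot> zpow Z2 z2) \<and>
              ueq (G1 z1 \<odot> zpow Z1 z1) (B1 z1 \<odot> zpow Z1 z1)))"
proof -
  obtain \<rho> where "kz_solutions H A1 A2 B2 B1 \<rho>"
    using kz_solutions_exist[OF hL hA1 hA2 hB2 hB1] by blast
  then interpret kz_solutions H A1 A2 B2 B1 \<rho> .
  show ?thesis
    apply (intro conjI allI impI)
    subgoal using rho_pos factorizations by blast
    subgoal by (rule factorization_12_unique) blast+
    subgoal by (rule factorization_21_unique) blast+
    done
qed

end
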